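(* Let $\phi$ be a windowed timed CEL formula. Then there exists a timed CEA $\mathcal{T}$ with two clocks that has synchronous resets such that $[\![\mathcal{T}]\!](\bar S)=[\![\phi]\!](\bar S)$ for every timed stream $\bar S$.
   Context: Events and streams. Events are partial finite-domain maps from attribute names to data values, each with a type in a set $\mathbf{T}$ of event types; predicates are sets of events from a fixed set $\mathbf{P}$ closed under intersection and complement and containing all events. A timed stream is $\bar S=(e_1,t_1)\cdots(e_n,t_n)$, $t_i\in\mathbb{Q}_{\ge0}$ strictly increasing. Fix a finite variable set $\mathbf{X}\supseteq\mathbf{T}$. A complex event is $C=(i,j,\mu)$, $1\le i\le j\le n$, $\mu:\mathbf{X}\to2^{\{i,\dots,j\}}$; $\mathrm{start}(C)=i$, $\mathrm{end}(C)=j$, $C(X)=\mu(X)$; $C_1\cup C_2$ takes min start, max end, pointwise union; $\pi_L(C)$ keeps start/end and $C(X)$ for $X\in L$, empty otherwise. Timed CEL syntax: $\varphi::=R\mid\varphi\ \mathrm{AS}\ X\mid\varphi\ \mathrm{FILTER}\ X[P]\mid\varphi\ \mathrm{OR}\ \varphi\mid\varphi\ \mathrm{AND}\ \varphi\mid\varphi;\varphi\mid\varphi:\varphi\mid\varphi+\mid\varphi\oplus\mid\pi_L(\varphi)\mid\langle\varphi\rangle_I\mid\varphi;_I\varphi\mid\varphi:_I\varphi\mid\varphi+_I\mid\varphi\oplus_I$, $I$ an interval of $\mathbb{Q}_{\ge0}$. The last five are the time operators; the others are CEL operators. Semantics: $[\![R]\!]=\{(i,i,\mu):\mathrm{type}(e_i)=R,\mu(R)=\{i\},\mu(X)=\emptyset\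 (X\ne R)\}$; $\mathrm{AS}\ X$: all $C$ with same start/end as some $C'\in[\![\varphi]\!]$, $C(X)=\bigcup_YC'(Y)$, other variables unchanged; FILTER keeps $C$ with every event indexed by $C(X)$ in $P$; OR/AND = union/intersection; $\varphi_1;\varphi_2$: $C_1\cup C_2$ with $C_k\in[\![\varphi_k]\!]$, $\mathrm{end}(C_1)<\mathrm{start}(C_2)$; $\varphi_1:\varphi_2$: same with $\mathrm{end}(C_1)+1=\mathrm{start}(C_2)$; $\varphi+=\varphi\cup(\varphi;\varphi+)$, $\varphi\oplus=\varphi\cup(\varphi:\varphi\oplus)$; $\pi_L$ projects each output; $\langle\varphi\rangle_I$ keeps $C$ with $t_{\mathrm{end}(C)}-t_{\mathrm{start}(C)}\in I$; $;_I$, $:_I$ are $;$, $:$ additionally requiring $t_{\mathrm{start}(C_2)}-t_{\mathrm{end}(C_1)}\in I$; $\varphi+_I=\varphi\cup(\varphi;_I(\varphi+_I))$, $\varphi\oplus_I=\varphi\cup(\varphi:_I(\varphi\oplus_I))$. A timed CEL formula is simple if it contains no projection $\pi_L$ and no time window $\langle\cdot\rangle_I$ as a subformula. A timed CEL formula is windowed if generated by $\phi::=\varphi\mid\psi\mid\phi\ \mathrm{AS}\ X\mid\phi\ \mathrm{FILTER}\ X[P]\mid\phi\ \mathrm{OR}\ \phi\mid\phi\ \mathrm{AND}\ \phi\mid\langle\phi\rangle_I$ where $\varphi$ is a formula with no time operators and $\psi$ is a simple timed CEL formula. Timed CEA. Clock conditions over a finite clock set $\mathbf{Z}$: $\gamma::=\mathrm{true}\mid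 z\sim c\ (\sim\in\{=,<,\le,\ge,>\},c\in\mathbb{Q}_{\ge0})\mid\gamma\wedge\gamma\mid\gamma\vee\gamma$. Clock valuations are partial maps $\nu:\mathbf{Z}\to\mathbb{R}_{\ge0}$; $\nu\models\gamma$ iff all clocks of $\gamma$ are defined and $\gamma$ holds; $\nu+t$ shifts defined clocks; $\mathrm{reset}_Z(\nu)$ sets clocks of $Z$ to $0$. A timed CEA is $(Q,\mathbf{P},\mathbf{X},\mathbf{Z},\Delta,q_0,F)$ with $\Delta\subseteq Q\times\mathbf{P}\times\mathcal{C}_{\mathbf{Z}}\times2^{\mathbf{X}}\times2^{\mathbf{Z}}\times Q$ finite; it has two clocks if $|\mathbf{Z}|=2$. With $\delta t_k=t_k-t_{k-1}$, $\delta t_1=t_1$, a run from $i$ to $j$ starts at $(q_0,\nu_i)$ with $\nu_i$ everywhere undefined and for each $k\in[i..j]$ uses $(p_k,P_k,\gamma_k,L_k,Z_k,p_{k+1})\in\Delta$ with $e_k\in P_k$, $\nu_k+\delta t_k\models\gamma_k$, $\nu_{k+1}=\mathrm{reset}_{Z_k}(\nu_k+\delta t_k)$; accepting if $p_{j+1}\in F$, outputting $(i,j,\mu)$ with $\mu(X)=\{k:X\in L_k\}$; $[\![\mathcal{T}]\!](\bar S)$ is the set of such outputs. $\mathcal{T}$ has synchronous resets if for every timed stream and every two runs (accepting or not) from the same $i$ to the same $j$ with the same label sequence $L_i,\dots,L_j$, the reset sets coincide: $Z_k=Z'_k$ for all $k$. *)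

theory Defs
  imports Complex_Main
begin

text \<open>A timed stream is a list of pairs (event, timestamp); positions are 1-based.\<close>
type_synonym 'ev tstream = "('ev \<times> rat) list"

definition timed_stream :: "'ev tstream \<Rightarrow> bool" where
  "timed_stream S \<longleftrightarrow> (\<forall>k < length S. 0 \<le> snd (S ! k)) \<and>
     (\<forall>k. Suc k < length S \<longrightarrow> snd (S ! k) < snd (S ! Suc k))"

definition ev :: "'ev tstream \<Rightarrow> nat \<Rightarrow> 'ev" where
  "ev S k = fst (S ! (k - 1))"

text \<open>t_k for 1 <= k <= n, and t_0 = 0 (so that delta t_1 = t_1).\<close>
definition tm :: "'ev tstream \<Rightarrow> nat \<Rightarrow> rat" where
  "tm S k = (if k = 0 then 0 else snd (S ! (k - 1)))"

definition dt :: "'ev tstream \<Rightarrow> nat \<Rightarrow> rat" where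
  "dt S k = tm S k - tm S (k - 1)"

text \<open>Ivl a ac u: lower bound a (closed iff ac), upper bound u (None = infinity,
  Some (b, bc): bound b, closed iff bc).\<close>
datatype interval = Ivl rat bool "(rat \<times> bool) option"

fun in_ivl :: "rat \<Rightarrow> interval \<Rightarrow> bool" where
  "in_ivl q (Ivl a ac u) \<longleftrightarrow> 0 \<le> q \<and> (if ac then a \<le> q else a < q) \<and>
     (case u of None \<Rightarrow> True | Some (b, bc) \<Rightarrow> (if bc then q \<le> b else q < b))"

fun ivl_wf :: "interval \<Rightarrow> bool" where
  "ivl_wf (Ivl a ac u) \<longleftrightarrow> 0 \<le> a \<and> (case u of None \<Rightarrow> True | Some (b, bc) \<Rightarrow> 0 \<le> b)"

type_synonym 'x cevent = "nat \<times> nat \<times> ('x \<Rightarrow> nat set)"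

definition cstart :: "'x cevent \<Rightarrow> nat" where "cstart C = fst C"
definition cend :: "'x cevent \<Rightarrow> nat" where "cend C = fst (snd C)"
definition cmu :: "'x cevent \<Rightarrow> 'x \<Rightarrow> nat set" where "cmu C = snd (snd C)"

definition cunion :: "'x cevent \<Rightarrow> 'x cevent \<Rightarrow> 'x cevent" where
  "cunion C1 C2 = (min (cstart C1) (cstart C2), max (cend C1) (cend C2),
                   \<lambda>X. cmu C1 X \<union> cmu C2 X)"

definition cproj :: "'x set \<Rightarrow> 'x cevent \<Rightarrow> 'x cevent" where
  "cproj L C = (cstart C, cend C, \<lambda>X. if X \<in> L then cmu C X else {})"

definition cas :: "'x \<Rightarrow> 'x cevent \<Rightarrow> 'x cevent" where
  "cas X C = (cstart C, cend C, (cmu C)(X := (\<Union>Y. cmu C Y)))"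

definition seqop :: "('x cevent \<Rightarrow> 'x cevent \<Rightarrow> bool) \<Rightarrow> 'x cevent set \<Rightarrow> 'x cevent set \<Rightarrow> 'x cevent set" where
  "seqop c A B = {cunion C1 C2 | C1 C2. C1 \<in> A \<and> C2 \<in> B \<and> c C1 C2}"

datatype ('x, 'ev) tcel =
    CAtom 'x
  | CAs "('x, 'ev) tcel" 'x
  | CFilter "('x, 'ev) tcel" 'x "'ev set"
  | COr "('x, 'ev) tcel" "('x, 'ev) tcel"
  | CAnd "('x, 'ev) tcel" "('x, 'ev) tcel"
  | CSeq "('x, 'ev) tcel" "('x, 'ev) tcel"
  | CNext "('x, 'ev) tcel" "('x, 'ev) tcel"
  | CPlus "('x, 'ev) tcel"
  | COPlus "('x, 'ev) tcel"
  | CProj "'x set" "('x, 'ev) tcel"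
  | CWin "('x, 'ev) tcel" interval
  | CSeqI "('x, 'ev) tcel" interval "('x, 'ev) tcel"
  | CNextI "('x, 'ev) tcel" interval "('x, 'ev) tcel"
  | CPlusI "('x, 'ev) tcel" interval
  | COPlusI "('x, 'ev) tcel" interval

definition seq_c :: "'x cevent \<Rightarrow> 'x cevent \<Rightarrow> bool" where
  "seq_c C1 C2 \<longleftrightarrow> cend C1 < cstart C2"

definition next_c :: "'x cevent \<Rightarrow> 'x cevent \<Rightarrow> bool" where
  "next_c C1 C2 \<longleftrightarrow> cend C1 + 1 = cstart C2"

definition gap_in :: "'ev tstream \<Rightarrow> interval \<Rightarrow> 'x cevent \<Rightarrow> 'x cevent \<Rightarrow> bool" where
  "gap_in S I C1 C2 \<longleftrightarrow> in_ivl (tm S (cstart C2) - tm S (cend C1)) I"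

primrec cel_sem :: "('ev \<Rightarrow> 'x) \<Rightarrow> 'ev tstream \<Rightarrow> ('x, 'ev) tcel \<Rightarrow> 'x cevent set" where
  "cel_sem tp S (CAtom R) =
     {(i, i, \<lambda>X. if X = R then {i} else {}) | i. 1 \<le> i \<and> i \<le> length S \<and> tp (ev S i) = R}"
| "cel_sem tp S (CAs f X) = cas X ` cel_sem tp S f"
| "cel_sem tp S (CFilter f X P) = {C \<in> cel_sem tp S f. \<forall>k \<in> cmu C X. ev S k \<in> P}"
| "cel_sem tp S (COr f g) = cel_sem tp S f \<union> cel_sem tp S g"
| "cel_sem tp S (CAnd f g) = cel_sem tp S f \<inter> cel_sem tp S g"
| "cel_sem tp S (CSeq f g) = seqop seq_c (cel_sem tp S f) (cel_sem tp S g)"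
| "cel_sem tp S (CNext f g) = seqop next_c (cel_sem tp S f) (cel_sem tp S g)"
| "cel_sem tp S (CPlus f) = lfp (\<lambda>Y. cel_sem tp S f \<union> seqop seq_c (cel_sem tp S f) Y)"
| "cel_sem tp S (COPlus f) = lfp (\<lambda>Y. cel_sem tp S f \<union> seqop next_c (cel_sem tp S f) Y)"
| "cel_sem tp S (CProj L f) = cproj L ` cel_sem tp S f"
| "cel_sem tp S (CWin f I) = {C \<in> cel_sem tp S f. in_ivl (tm S (cend C) - tm S (cstart C)) I}"
| "cel_sem tp S (CSeqI f I g) =
     seqop (\<lambda>C1 C2. seq_c C1 C2 \<and> gap_in S I C1 C2) (cel_sem tp S f) (cel_sem tp S g)"
| "cel_sem tp S (CNextI f I g) =
     seqop (\<lambda>C1 C2. next_c C1 C2 \<and> gap_in S I C1 C2) (cel_sem tp S f) (cel_sem tp S g)"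
| "cel_sem tp S (CPlusI f I) =
     lfp (\<lambda>Y. cel_sem tp S f \<union> seqop (\<lambda>C1 C2. seq_c C1 C2 \<and> gap_in S I C1 C2) (cel_sem tp S f) Y)"
| "cel_sem tp S (COPlusI f I) =
     lfp (\<lambda>Y. cel_sem tp S f \<union> seqop (\<lambda>C1 C2. next_c C1 C2 \<and> gap_in S I C1 C2) (cel_sem tp S f) Y)"

primrec cel_wf :: "'x set \<Rightarrow> 'ev set set \<Rightarrow> ('x, 'ev) tcel \<Rightarrow> bool" where
  "cel_wf T Ps (CAtom R) \<longleftrightarrow> R \<in> T"
| "cel_wf T Ps (CAs f X) \<longleftrightarrow> cel_wf T Ps f"
| "cel_wf T Ps (CFilter f X P) \<longleftrightarrow> cel_wf T Ps f \<and> P \<in> Ps"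
| "cel_wf T Ps (COr f g) \<longleftrightarrow> cel_wf T Ps f \<and> cel_wf T Ps g"
| "cel_wf T Ps (CAnd f g) \<longleftrightarrow> cel_wf T Ps f \<and> cel_wf T Ps g"
| "cel_wf T Ps (CSeq f g) \<longleftrightarrow> cel_wf T Ps f \<and> cel_wf T Ps g"
| "cel_wf T Ps (CNext f g) \<longleftrightarrow> cel_wf T Ps f \<and> cel_wf T Ps g"
| "cel_wf T Ps (CPlus f) \<longleftrightarrow> cel_wf T Ps f"
| "cel_wf T Ps (COPlus f) \<longleftrightarrow> cel_wf T Ps f"
| "cel_wf T Ps (CProj L f) \<longleftrightarrow> cel_wf T Ps f"
| "cel_wf T Ps (CWin f I) \<longleftrightarrow> cel_wf T Ps f \<and> ivl_wf I"
| "cel_wf T Ps (CSeqI f I g) \<longleftrightarrow> cel_wf T Ps f \<and> ivl_wf I \<and> cel_wf T Ps g"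
| "cel_wf T Ps (CNextI f I g) \<longleftrightarrow> cel_wf T Ps f \<and> ivl_wf I \<and> cel_wf T Ps g"
| "cel_wf T Ps (CPlusI f I) \<longleftrightarrow> cel_wf T Ps f \<and> ivl_wf I"
| "cel_wf T Ps (COPlusI f I) \<longleftrightarrow> cel_wf T Ps f \<and> ivl_wf I"

primrec no_time :: "('x, 'ev) tcel \<Rightarrow> bool" where
  "no_time (CAtom R) \<longleftrightarrow> True"
| "no_time (CAs f X) \<longleftrightarrow> no_time f"
| "no_time (CFilter f X P) \<longleftrightarrow> no_time f"
| "no_time (COr f g) \<longleftrightarrow> no_time f \<and> no_time g"
| "no_time (CAnd f g) \<longleftrightarrow> no_time f \<and> no_time g"
| "no_time (CSeq f g) \<longleftrightarrow> no_time f \<and> no_time g"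
| "no_time (CNext f g) \<longleftrightarrow> no_time f \<and> no_time g"
| "no_time (CPlus f) \<longleftrightarrow> no_time f"
| "no_time (COPlus f) \<longleftrightarrow> no_time f"
| "no_time (CProj L f) \<longleftrightarrow> no_time f"
| "no_time (CWin f I) \<longleftrightarrow> False"
| "no_time (CSeqI f I g) \<longleftrightarrow> False"
| "no_time (CNextI f I g) \<longleftrightarrow> False"
| "no_time (CPlusI f I) \<longleftrightarrow> False"
| "no_time (COPlusI f I) \<longleftrightarrow> False"

primrec simple :: "('x, 'ev) tcel \<Rightarrow> bool" where
  "simple (CAtom R) \<longleftrightarrow> True"
| "simple (CAs f X) \<longleftrightarrow> simple f"
| "simple (CFilter f X P) \<longleftrightarrow> simple f"
| "simple (COr f g) \<longleftrightarrow> simple f \<and> simple g"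
| "simple (CAnd f g) \<longleftrightarrow> simple f \<and> simple g"
| "simple (CSeq f g) \<longleftrightarrow> simple f \<and> simple g"
| "simple (CNext f g) \<longleftrightarrow> simple f \<and> simple g"
| "simple (CPlus f) \<longleftrightarrow> simple f"
| "simple (COPlus f) \<longleftrightarrow> simple f"
| "simple (CProj L f) \<longleftrightarrow> False"
| "simple (CWin f I) \<longleftrightarrow> False"
| "simple (CSeqI f I g) \<longleftrightarrow> simple f \<and> simple g"
| "simple (CNextI f I g) \<longleftrightarrow> simple f \<and> simple g"
| "simple (CPlusI f I) \<longleftrightarrow> simple f"
| "simple (COPlusI f I) \<longleftrightarrow> simple f"

inductive windowed :: "('x, 'ev) tcel \<Rightarrow> bool" where
  w_notime: "no_time f \<Longrightarrow> windowed f"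
| w_simple: "simple f \<Longrightarrow> windowed f"
| w_as: "windowed f \<Longrightarrow> windowed (CAs f X)"
| w_filter: "windowed f \<Longrightarrow> windowed (CFilter f X P)"
| w_or: "windowed f \<Longrightarrow> windowed g \<Longrightarrow> windowed (COr f g)"
| w_and: "windowed f \<Longrightarrow> windowed g \<Longrightarrow> windowed (CAnd f g)"
| w_win: "windowed f \<Longrightarrow> windowed (CWin f I)"

datatype cmp = CmpEq | CmpLt | CmpLe | CmpGe | CmpGt

datatype 'z guard = GTrue | GCmp 'z cmp rat | GAnd "'z guard" "'z guard" | GOr "'z guard" "'z guard"

type_synonym 'z valuation = "'z \<Rightarrow> real option"

fun cmp_holds :: "cmp \<Rightarrow> real \<Rightarrow> real \<Rightarrow> bool" where
  "cmp_holds CmpEq v c \<longleftrightarrow> v = c"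
| "cmp_holds CmpLt v c \<longleftrightarrow> v < c"
| "cmp_holds CmpLe v c \<longleftrightarrow> v \<le> c"
| "cmp_holds CmpGe v c \<longleftrightarrow> v \<ge> c"
| "cmp_holds CmpGt v c \<longleftrightarrow> v > c"

primrec gclocks :: "'z guard \<Rightarrow> 'z set" where
  "gclocks GTrue = {}"
| "gclocks (GCmp z op c) = {z}"
| "gclocks (GAnd g h) = gclocks g \<union> gclocks h"
| "gclocks (GOr g h) = gclocks g \<union> gclocks h"

primrec gconsts_ok :: "'z guard \<Rightarrow> bool" where
  "gconsts_ok GTrue = True"
| "gconsts_ok (GCmp z op c) = (0 \<le> c)"
| "gconsts_ok (GAnd g h) = (gconsts_ok g \<and> gconsts_ok h)"
| "gconsts_ok (GOr g h) = (gconsts_ok g \<and> gconsts_ok h)"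

primrec gholds :: "'z valuation \<Rightarrow> 'z guard \<Rightarrow> bool" where
  "gholds \<nu> GTrue = True"
| "gholds \<nu> (GCmp z op c) = (case \<nu> z of None \<Rightarrow> False | Some v \<Rightarrow> cmp_holds op v (of_rat c))"
| "gholds \<nu> (GAnd g h) = (gholds \<nu> g \<and> gholds \<nu> h)"
| "gholds \<nu> (GOr g h) = (gholds \<nu> g \<or> gholds \<nu> h)"

definition models :: "'z valuation \<Rightarrow> 'z guard \<Rightarrow> bool" where
  "models \<nu> g \<longleftrightarrow> (\<forall>z \<in> gclocks g. \<nu> z \<noteq> None) \<and> gholds \<nu> g"

definition vshift :: "'z valuation \<Rightarrow> real \<Rightarrow> 'z valuation" where
  "vshift \<nu> t = (\<lambda>z. map_option (\<lambda>v. v + t) (\<nu> z))"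

definition vreset :: "'z set \<Rightarrow> 'z valuation \<Rightarrow> 'z valuation" where
  "vreset Z \<nu> = (\<lambda>z. if z \<in> Z then Some 0 else \<nu> z)"

type_synonym ('q, 'z, 'x, 'ev) trans = "'q \<times> 'ev set \<times> 'z guard \<times> 'x set \<times> 'z set \<times> 'q"

record ('q, 'z, 'x, 'ev) tcea =
  states :: "'q set"
  clocks :: "'z set"
  delta :: "('q, 'z, 'x, 'ev) trans set"
  init :: 'q
  final :: "'q set"

definition tsrc :: "('q, 'z, 'x, 'ev) trans \<Rightarrow> 'q" where "tsrc t = fst t"
definition tpred :: "('q, 'z, 'x, 'ev) trans \<Rightarrow> 'ev set" where "tpred t = fst (snd t)"
definition tguard :: "('q, 'z, 'x, 'ev) trans \<Rightarrow> 'z guard" where "tguard t = fst (snd (snd t))"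
definition tlabels :: "('q, 'z, 'x, 'ev) trans \<Rightarrow> 'x set" where "tlabels t = fst (snd (snd (snd t)))"
definition tresets :: "('q, 'z, 'x, 'ev) trans \<Rightarrow> 'z set" where "tresets t = fst (snd (snd (snd (snd t))))"
definition ttgt :: "('q, 'z, 'x, 'ev) trans \<Rightarrow> 'q" where "ttgt t = snd (snd (snd (snd (snd t))))"

definition tcea_wf :: "'ev set set \<Rightarrow> ('q, 'z, 'x, 'ev) tcea \<Rightarrow> bool" where
  "tcea_wf Ps A \<longleftrightarrow> finite (states A) \<and> finite (clocks A) \<and> finite (delta A) \<and>
     init A \<in> states A \<and> final A \<subseteq> states A \<and>
     (\<forall>t \<in> delta A. tsrc t \<in> states A \<and> ttgt t \<in> states A \<and> tpred t \<in> Ps \<and>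
        gclocks (tguard t) \<subseteq> clocks A \<and> gconsts_ok (tguard t) \<and> tresets t \<subseteq> clocks A)"

text \<open>Valuation before reading position i+m along a run rho (indexed by position)
  started at position i.\<close>
primrec vals :: "'ev tstream \<Rightarrow> (nat \<Rightarrow> ('q, 'z, 'x, 'ev) trans) \<Rightarrow> nat \<Rightarrow> nat \<Rightarrow> 'z valuation" where
  "vals S \<rho> i 0 = (\<lambda>_. None)"
| "vals S \<rho> i (Suc m) = vreset (tresets (\<rho> (i + m))) (vshift (vals S \<rho> i m) (of_rat (dt S (i + m))))"

text \<open>rho k is the transition used at position k, for k in [i..j].\<close>
definition is_run :: "('q, 'z, 'x, 'ev) tcea \<Rightarrow> 'ev tstream \<Rightarrow> nat \<Rightarrow> nat \<Rightarrow>
                       (nat \<Rightarrow> ('q, 'z, 'x, 'ev) trans) \<Rightarrow> bool" where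
  "is_run A S i j \<rho> \<longleftrightarrow> 1 \<le> i \<and> i \<le> j \<and> j \<le> length S \<and> tsrc (\<rho> i) = init A \<and>
     (\<forall>k \<in> {i..j}. \<rho> k \<in> delta A \<and> ev S k \<in> tpred (\<rho> k) \<and>
         models (vshift (vals S \<rho> i (k - i)) (of_rat (dt S k))) (tguard (\<rho> k))) \<and>
     (\<forall>k \<in> {i..<j}. ttgt (\<rho> k) = tsrc (\<rho> (Suc k)))"

definition run_output :: "nat \<Rightarrow> nat \<Rightarrow> (nat \<Rightarrow> ('q, 'z, 'x, 'ev) trans) \<Rightarrow> 'x cevent" where
  "run_output i j \<rho> = (i, j, \<lambda>X. {k \<in> {i..j}. X \<in> tlabels (\<rho> k)})"

definition cea_sem :: "('q, 'z, 'x, 'ev) tcea \<Rightarrow> 'ev tstream \<Rightarrow> 'x cevent set" where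
  "cea_sem A S = {run_output i j \<rho> | i j \<rho>. is_run A S i j \<rho> \<and> ttgt (\<rho> j) \<in> final A}"

definition sync_resets :: "('q, 'z, 'x, 'ev) tcea \<Rightarrow> bool" where
  "sync_resets A \<longleftrightarrow> (\<forall>S i j \<rho> \<rho>'. timed_stream S \<and> is_run A S i j \<rho> \<and> is_run A S i j \<rho>' \<and>
       (\<forall>k \<in> {i..j}. tlabels (\<rho> k) = tlabels (\<rho>' k)) \<longrightarrow>
       (\<forall>k \<in> {i..j}. tresets (\<rho> k) = tresets (\<rho>' k)))"

end

(*
  Every windowed formula is compiled, by recursion on its structure, into a finite automaton
  with two kinds of timing constraints: gap guards on edges, bounding the time elapsed since
  the last position marked by some variable, and windows on accepting states, bounding the
  duration of the whole match. Gap guards suffice for the time operators of simple formulas: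
  without projection every match of a simple formula marks its first and its last position, so
  when the second operand of ;_I, :_I, +_I or (+)_I starts, the last marked position is the end
  of the first operand. Time-free subformulas, where projection may occur, give automata without
  gap guards, and windows only occur above the other operators, so they can be checked on
  acceptance.

  Such an automaton is a timed CEA with two clocks: clock 0 is reset at every marked position and
  reads the gap guards, clock 1 is reset at the first position and reads the windows. Both resets
  are determined by the labels and by whether the position is the first of the run, hence they
  are synchronous.
*)
theory Submission
  imports Defs "HOL-Library.Nat_Bijection"
begin

section \<open>Gap automata\<close>

text \<open>An edge \<open>Edge p P G L q\<close> leads from state \<open>p\<close> to \<open>q\<close>, reads an event in \<open>P\<close> and marks its
  position with the variables in \<open>L\<close>. It can only be taken if an earlier position of the run is
  marked and the time elapsed since the last marked one lies in every interval of the gap guard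
  \<open>G\<close> (no condition if \<open>G = []\<close>). A run ending in an accepting pair \<open>(q, W)\<close> is accepted if its
  duration lies in every interval of \<open>W\<close>. State 0 is initial; proper automata never re-enter it.\<close>

datatype ('x, 'ev) edge =
  Edge (esrc: nat) (epred: "'ev set") (egaps: "interval list") (elabels: "'x set") (etgt: nat)

datatype ('x, 'ev) gaut = GAut (edges: "('x, 'ev) edge set") (accepting: "(nat \<times> interval list) set")

fun path :: "('x, 'ev) edge set \<Rightarrow> nat \<Rightarrow> ('x, 'ev) edge list \<Rightarrow> nat \<Rightarrow> bool" where
  "path E q [] q' \<longleftrightarrow> q = q'"
| "path E q (t # ts) q' \<longleftrightarrow> t \<in> E \<and> esrc t = q \<and> path E (etgt t) ts q'"

definition reaches :: "('x, 'ev) gaut \<Rightarrow> ('x, 'ev) edge list \<Rightarrow> interval list \<Rightarrow> bool" where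
  "reaches A ts W \<longleftrightarrow> (\<exists>q. path (edges A) 0 ts q \<and> (q, W) \<in> accepting A)"

definition gaps_ok :: "'ev tstream \<Rightarrow> nat \<Rightarrow> nat option \<Rightarrow> interval list \<Rightarrow> bool" where
  "gaps_ok S k p G \<longleftrightarrow> G = [] \<or> (\<exists>p'. p = Some p' \<and> (\<forall>I\<in>set G. in_ivl (tm S k - tm S p') I))"

fun steps_ok :: "'ev tstream \<Rightarrow> nat \<Rightarrow> nat option \<Rightarrow> ('x, 'ev) edge list \<Rightarrow> bool" where
  "steps_ok S k p [] = True"
| "steps_ok S k p (t # ts) \<longleftrightarrow> ev S k \<in> epred t \<and> gaps_ok S k p (egaps t) \<and>
     steps_ok S (Suc k) (if elabels t = {} then p else Some k) ts"

fun last_mark :: "nat \<Rightarrow> nat option \<Rightarrow> ('x, 'ev) edge list \<Rightarrow> nat option" where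
  "last_mark k p [] = p"
| "last_mark k p (t # ts) = last_mark (Suc k) (if elabels t = {} then p else Some k) ts"

fun marks :: "nat \<Rightarrow> ('x, 'ev) edge list \<Rightarrow> 'x \<Rightarrow> nat set" where
  "marks k [] = (\<lambda>X. {})"
| "marks k (t # ts) = (\<lambda>X. (if X \<in> elabels t then {k} else {}) \<union> marks (Suc k) ts X)"

definition fits :: "'ev tstream \<Rightarrow> nat \<Rightarrow> ('x, 'ev) edge list \<Rightarrow> bool" where
  "fits S i ts \<longleftrightarrow> ts \<noteq> [] \<and> 1 \<le> i \<and> i + length ts \<le> Suc (length S)"

definition window_ok :: "'ev tstream \<Rightarrow> nat \<Rightarrow> ('x, 'ev) edge list \<Rightarrow> interval list \<Rightarrow> bool" where
  "window_ok S i ts W \<longleftrightarrow> (\<forall>I\<in>set W. in_ivl (tm S (i + length ts - 1) - tm S i) I)"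

definition accepts :: "('x, 'ev) gaut \<Rightarrow> 'ev tstream \<Rightarrow> nat \<Rightarrow> ('x, 'ev) edge list \<Rightarrow> bool" where
  "accepts A S i ts \<longleftrightarrow>
     fits S i ts \<and> steps_ok S i None ts \<and> (\<exists>W. reaches A ts W \<and> window_ok S i ts W)"

definition cev :: "nat \<Rightarrow> ('x, 'ev) edge list \<Rightarrow> 'x cevent" where
  "cev i ts = (i, i + length ts - 1, marks i ts)"

definition gsem :: "('x, 'ev) gaut \<Rightarrow> 'ev tstream \<Rightarrow> 'x cevent set" where
  "gsem A S = {cev i ts | i ts. accepts A S i ts}"

definition proper :: "('x, 'ev) gaut \<Rightarrow> bool" where
  "proper A \<longleftrightarrow> finite (edges A) \<and> finite (accepting A) \<and>
     (\<forall>t\<in>edges A. etgt t \<noteq> 0) \<and> (\<forall>(q, W)\<in>accepting A. q \<noteq> 0)"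

definition window_free :: "('x, 'ev) gaut \<Rightarrow> bool" where
  "window_free A \<longleftrightarrow> (\<forall>(q, W)\<in>accepting A. W = [])"

definition gap_free :: "('x, 'ev) edge set \<Rightarrow> bool" where
  "gap_free E \<longleftrightarrow> (\<forall>t\<in>E. egaps t = [])"

definition labelled_ends :: "('x, 'ev) gaut \<Rightarrow> bool" where
  "labelled_ends A \<longleftrightarrow>
     (\<forall>t\<in>edges A. esrc t = 0 \<or> etgt t \<in> fst ` accepting A \<longrightarrow> elabels t \<noteq> {})"

definition gaut_wf :: "'ev set set \<Rightarrow> ('x, 'ev) gaut \<Rightarrow> bool" where
  "gaut_wf Ps A \<longleftrightarrow> (\<forall>t\<in>edges A. epred t \<in> Ps \<and> (\<forall>I\<in>set (egaps t). ivl_wf I)) \<and>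
     (\<forall>q W. (q, W) \<in> accepting A \<longrightarrow> (\<forall>I\<in>set W. ivl_wf I))"

lemma path_append [simp]: "path E q (xs @ ys) q' \<longleftrightarrow> (\<exists>r. path E q xs r \<and> path E r ys q')"
  by (induction xs arbitrary: q) auto

lemma path_subset: "path E q ts q' \<Longrightarrow> set ts \<subseteq> E"
  by (induction ts arbitrary: q) auto

lemma path_mono: "path E q ts q' \<Longrightarrow> E \<subseteq> E' \<Longrightarrow> path E' q ts q'"
  by (induction ts arbitrary: q) auto

lemma path_invariant:
  assumes "path E q ts q'" "\<Phi> q" "\<forall>t\<in>E. \<Phi> (esrc t) \<longrightarrow> t \<in> E' \<and> \<Phi> (etgt t)"
  shows "path E' q ts q' \<and> \<Phi> q'"
  using assms by (induction ts arbitrary: q) auto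

lemma path_image:
  assumes "\<forall>t\<in>E. esrc (f t) = r (esrc t) \<and> etgt (f t) = r (etgt t)" "path E q ts q'"
  shows "path (f ` E) (r q) (map f ts) (r q')"
  using assms by (induction ts arbitrary: q) auto

lemma path_image_inv:
  assumes "inj r" "\<forall>t\<in>E. esrc (f t) = r (esrc t) \<and> etgt (f t) = r (etgt t)"
    and "path (f ` E) (r q) ts q''"
  shows "\<exists>ts0 q'. ts = map f ts0 \<and> path E q ts0 q' \<and> q'' = r q'"
  using assms(3)
proof (induction ts arbitrary: q)
  case (Cons t ts)
  then obtain t0 where t0: "t0 \<in> E" "t = f t0" "esrc t0 = q" "path (f ` E) (r (etgt t0)) ts q''"
    using assms(1,2) by (auto simp: inj_eq)
  with Cons.IH obtain ts0 q' where "ts = map f ts0" "path E (etgt t0) ts0 q'" "q'' = r q'"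
    by blast
  with t0 show ?case by (intro exI[of _ "t0 # ts0"]) auto
qed simp

lemma path_link: "path E q ts q' \<Longrightarrow> Suc m < length ts \<Longrightarrow> etgt (ts ! m) = esrc (ts ! Suc m)"
proof (induction ts arbitrary: q m)
  case (Cons t ts)
  then show ?case
    by (cases m; cases ts) auto
qed simp

lemma path_hd_last: "path E q ts q' \<Longrightarrow> ts \<noteq> [] \<Longrightarrow> esrc (hd ts) = q \<and> etgt (last ts) = q'"
  by (induction ts arbitrary: q) auto

lemma path_of_links:
  assumes "ts \<noteq> []" "set ts \<subseteq> E" "\<forall>m. Suc m < length ts \<longrightarrow> etgt (ts ! m) = esrc (ts ! Suc m)"
  shows "path E (esrc (hd ts)) ts (etgt (last ts))"
  using assms
proof (induction ts)
  case (Cons t ts)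
  show ?case
  proof (cases "ts = []")
    case False
    have "\<forall>m. Suc m < length ts \<longrightarrow> etgt (ts ! m) = esrc (ts ! Suc m)"
      using Cons.prems(3) by (metis Suc_less_eq length_Cons nth_Cons_Suc)
    moreover have "etgt t = esrc (hd ts)"
      using Cons.prems(3)[rule_format, of 0] False by (simp add: hd_conv_nth)
    ultimately show ?thesis
      using Cons False by simp
  qed (use Cons.prems in simp)
qed simp

lemma path_esrc_eq_0_iff:
  assumes "proper A" "path (edges A) 0 ts q"
  shows "\<forall>m<length ts. esrc (ts ! m) = 0 \<longleftrightarrow> m = 0"
proof (intro allI impI)
  fix m assume m: "m < length ts"
  show "esrc (ts ! m) = 0 \<longleftrightarrow> m = 0"
  proof (cases m)
    case 0
    with assms(2) m show ?thesis
      using path_hd_last[OF assms(2)] by (simp add: hd_conv_nth)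
  next
    case (Suc m')
    with assms m have "esrc (ts ! m) = etgt (ts ! m')" "ts ! m' \<in> edges A"
      using path_link path_subset by (metis, fastforce)
    with assms(1) Suc show ?thesis
      by (auto simp: proper_def)
  qed
qed

lemma path_nonzero:
  assumes "\<forall>t\<in>E. etgt t \<noteq> 0" "path E q ts q'" "q \<noteq> 0"
  shows "path {t \<in> E. esrc t \<noteq> 0} q ts q'"
  using path_invariant[OF assms(2), of "\<lambda>n. n \<noteq> 0" "{t \<in> E. esrc t \<noteq> 0}"] assms(1,3) by auto

lemma path_first_exit:
  assumes "path E q ts q'" "\<Phi> q"
  obtains "path {u \<in> E. \<Phi> (esrc u) \<and> \<Phi> (etgt u)} q ts q'"
  | xs t ys where "ts = xs @ t # ys" "path {u \<in> E. \<Phi> (esrc u) \<and> \<Phi> (etgt u)} q xs (esrc t)"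
      "t \<in> E" "\<Phi> (esrc t)" "\<not> \<Phi> (etgt t)" "path E (etgt t) ys q'"
proof -
  let ?E = "{u \<in> E. \<Phi> (esrc u) \<and> \<Phi> (etgt u)}"
  have "path ?E q ts q' \<or> (\<exists>xs t ys. ts = xs @ t # ys \<and> path ?E q xs (esrc t) \<and> t \<in> E \<and>
          \<Phi> (esrc t) \<and> \<not> \<Phi> (etgt t) \<and> path E (etgt t) ys q')"
    using assms
  proof (induction ts arbitrary: q)
    case (Cons t ts)
    show ?case
    proof (cases "\<Phi> (etgt t)")
      case True
      with Cons.prems have t: "t \<in> ?E" "esrc t = q" "path E (etgt t) ts q'"
        by auto
      from Cons.IH[OF t(3) True] show ?thesis
      proof (elim disjE exE conjE)
        fix xs t' ys
        assume "ts = xs @ t' # ys" "path ?E (etgt t) xs (esrc t')" "t' \<in> E" "\<Phi> (esrc t')"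
          "\<not> \<Phi> (etgt t')" "path E (etgt t') ys q'"
        with t show ?thesis
          by (intro disjI2 exI[of _ "t # xs"] exI[of _ t'] exI[of _ ys]) auto
      qed (use t in auto)
    next
      case False
      with Cons.prems show ?thesis
        by (intro disjI2 exI[of _ "[]"] exI[of _ t] exI[of _ ts]) auto
    qed
  qed simp
  with that show ?thesis
    by blast
qed

lemma steps_ok_append [simp]:
  "steps_ok S k p (xs @ ys) \<longleftrightarrow> steps_ok S k p xs \<and> steps_ok S (k + length xs) (last_mark k p xs) ys"
  by (induction xs arbitrary: k p) auto

lemma last_mark_append [simp]: "last_mark k p (xs @ ys) = last_mark (k + length xs) (last_mark k p xs) ys"
  by (induction xs arbitrary: k p) auto

lemma marks_append [simp]: "marks k (xs @ ys) X = marks k xs X \<union> marks (k + length xs) ys X"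
  by (induction xs arbitrary: k) auto

lemma marks_iff: "n \<in> marks k ts X \<longleftrightarrow> k \<le> n \<and> n < k + length ts \<and> X \<in> elabels (ts ! (n - k))"
proof (induction ts arbitrary: k)
  case (Cons t ts)
  then show ?case
    by (cases "n = k") (auto simp: nth_Cons' Suc_diff_Suc)
qed simp

lemma last_mark_range: "last_mark k p xs = Some n \<Longrightarrow> p = Some n \<or> k \<le> n \<and> n < k + length xs"
  by (induction xs arbitrary: k p) (fastforce split: if_splits)+

lemma steps_ok_conv_nth:
  "steps_ok S k p ts \<longleftrightarrow>
     (\<forall>m<length ts. ev S (k + m) \<in> epred (ts ! m) \<and> gaps_ok S (k + m) (last_mark k p (take m ts)) (egaps (ts ! m)))"
proof (induction ts arbitrary: k p)
  case (Cons t ts)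
  show ?case
    unfolding steps_ok.simps Cons length_Cons All_less_Suc2 by simp
qed simp

lemma fits_map [simp]: "fits S i (map f ts) = fits S i ts"
  by (simp add: fits_def)

lemma window_ok_map [simp]: "window_ok S i (map f ts) W = window_ok S i ts W"
  by (simp add: window_ok_def)

lemma window_ok_Nil [simp]: "window_ok S i ts []"
  by (simp add: window_ok_def)

lemma window_ok_append [simp]:
  "window_ok S i ts (W1 @ W2) \<longleftrightarrow> window_ok S i ts W1 \<and> window_ok S i ts W2"
  by (auto simp: window_ok_def)

lemma cev_sel [simp]:
  "cstart (cev i ts) = i" "cend (cev i ts) = i + length ts - 1" "cmu (cev i ts) = marks i ts"
  by (simp_all add: cev_def cstart_def cend_def cmu_def)

lemma steps_ok_gap_free: "gap_free (set ts) \<Longrightarrow> steps_ok S k p ts = steps_ok S k p' ts"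
  by (induction ts arbitrary: k p p') (auto simp: gap_free_def gaps_ok_def)

lemma gap_free_path: "gap_free E \<Longrightarrow> path E q ts q' \<Longrightarrow> gap_free (set ts)"
  using path_subset unfolding gap_free_def by blast

lemma gap_free_reaches: "gap_free (edges A) \<Longrightarrow> reaches A ts W \<Longrightarrow> gap_free (set ts)"
  unfolding reaches_def using gap_free_path by blast

lemma window_free_reaches: "window_free A \<Longrightarrow> reaches A ts W \<Longrightarrow> W = []"
  by (auto simp: window_free_def reaches_def)

lemma labelled_ends_last:
  "labelled_ends A \<Longrightarrow> reaches A (xs @ [x]) W \<Longrightarrow> elabels x \<noteq> {}"
  unfolding labelled_ends_def reaches_def by force

lemma labelled_ends_first:
  "labelled_ends A \<Longrightarrow> reaches A (z # zs) W \<Longrightarrow> elabels z \<noteq> {}"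
  unfolding labelled_ends_def reaches_def by force

lemma accepts_first_gap_free: "accepts A S i (z # zs) \<Longrightarrow> egaps z = []"
  by (simp add: accepts_def gaps_ok_def)

definition same_action :: "('x, 'ev) edge \<Rightarrow> ('x, 'ev) edge \<Rightarrow> bool" where
  "same_action t u \<longleftrightarrow> epred t = epred u \<and> egaps t = egaps u \<and> elabels t = elabels u"

lemma steps_ok_same_action:
  "list_all2 same_action xs ys \<Longrightarrow> steps_ok S k p xs = steps_ok S k p ys"
  by (induction xs ys arbitrary: k p rule: list_all2_induct) (auto simp: same_action_def)

lemma last_mark_same_action:
  "list_all2 same_action xs ys \<Longrightarrow> last_mark k p xs = last_mark k p ys"
  by (induction xs ys arbitrary: k p rule: list_all2_induct) (auto simp: same_action_def)

lemma marks_same_action: "list_all2 same_action xs ys \<Longrightarrow> marks k xs = marks k ys"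
  by (induction xs ys arbitrary: k rule: list_all2_induct) (auto simp: same_action_def)

lemma same_action_map: "(\<And>t. same_action t (f t)) \<Longrightarrow> list_all2 same_action xs (map f xs)"
  by (induction xs) auto

lemma same_action_refl: "list_all2 same_action ts ts"
  by (simp add: list_all2_refl same_action_def)

section \<open>Atoms, edge maps and windows\<close>

definition atom_aut :: "('ev \<Rightarrow> 'x) \<Rightarrow> 'x \<Rightarrow> ('x, 'ev) gaut" where
  "atom_aut tp R = GAut {Edge 0 {e. tp e = R} [] {R} 1} {(1, [])}"

lemma reaches_atom_aut: "reaches (atom_aut tp R) ts W \<longleftrightarrow> ts = [Edge 0 {e. tp e = R} [] {R} 1] \<and> W = []"
proof -
  have "path {Edge 0 P [] L 1} 0 ts 1 \<longleftrightarrow> ts = [Edge 0 P [] L 1]" for P L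
    by (cases ts; cases "tl ts") auto
  then show ?thesis unfolding reaches_def atom_aut_def by auto
qed

lemma gsem_atom: "gsem (atom_aut tp R) S = cel_sem tp S (CAtom R)"
  unfolding gsem_def accepts_def reaches_atom_aut
  by (auto simp: fits_def window_ok_def gaps_ok_def cev_def)

definition map_edges :: "(('x, 'ev) edge \<Rightarrow> ('x, 'ev) edge) \<Rightarrow> ('x, 'ev) gaut \<Rightarrow> ('x, 'ev) gaut" where
  "map_edges f A = GAut (f ` edges A) (accepting A)"

lemma reaches_map_edges:
  assumes "\<forall>t. esrc (f t) = esrc t \<and> etgt (f t) = etgt t"
  shows "reaches (map_edges f A) ts W \<longleftrightarrow> (\<exists>ts0. ts = map f ts0 \<and> reaches A ts0 W)"
proof -
  have "\<forall>t\<in>edges A. esrc (f t) = id (esrc t) \<and> etgt (f t) = id (etgt t)"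
    using assms by simp
  from path_image[OF this] path_image_inv[OF inj_on_id this]
  have "path (f ` edges A) 0 ts q \<longleftrightarrow> (\<exists>ts0. ts = map f ts0 \<and> path (edges A) 0 ts0 q)" for q
    by (metis id_apply)
  then show ?thesis unfolding reaches_def map_edges_def by auto
qed

lemma accepts_map_edges:
  assumes "\<forall>t. esrc (f t) = esrc t \<and> etgt (f t) = etgt t"
  shows "accepts (map_edges f A) S i ts \<longleftrightarrow> (\<exists>ts0 W. ts = map f ts0 \<and> fits S i ts0 \<and>
           steps_ok S i None (map f ts0) \<and> reaches A ts0 W \<and> window_ok S i ts0 W)"
  unfolding accepts_def reaches_map_edges[OF assms] by force

lemma gsem_map_edges:
  assumes "\<forall>t. esrc (f t) = esrc t \<and> etgt (f t) = etgt t"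
    and "\<And>i ts W. reaches A ts W \<Longrightarrow>
           steps_ok S i None (map f ts) \<longleftrightarrow> steps_ok S i None ts \<and> Q (cev i ts)"
    and "\<And>i ts. cev i (map f ts) = g (cev i ts)"
  shows "gsem (map_edges f A) S = g ` {C \<in> gsem A S. Q C}"
proof -
  have acc: "accepts (map_edges f A) S i ts \<longleftrightarrow>
          (\<exists>ts0. ts = map f ts0 \<and> accepts A S i ts0 \<and> Q (cev i ts0))" for i ts
    using accepts_map_edges[OF assms(1), of A S i ts] assms(2) unfolding accepts_def by blast
  show ?thesis
  proof (intro set_eqI iffI)
    fix C assume "C \<in> gsem (map_edges f A) S"
    then obtain i ts where "C = g (cev i ts)" "accepts A S i ts" "Q (cev i ts)"
      unfolding gsem_def acc by (auto simp: assms(3))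
    then show "C \<in> g ` {C \<in> gsem A S. Q C}"
      unfolding gsem_def by blast
  next
    fix C assume "C \<in> g ` {C \<in> gsem A S. Q C}"
    then obtain i ts where "C = g (cev i ts)" "accepts A S i ts" "Q (cev i ts)"
      unfolding gsem_def by blast
    then have "C = cev i (map f ts)" "accepts (map_edges f A) S i (map f ts)"
      by (auto simp: assms(3) acc)
    then show "C \<in> gsem (map_edges f A) S"
      unfolding gsem_def by blast
  qed
qed

definition as_edge :: "'x \<Rightarrow> ('x, 'ev) edge \<Rightarrow> ('x, 'ev) edge" where
  "as_edge X t =
     Edge (esrc t) (epred t) (egaps t) (if elabels t = {} then {} else insert X (elabels t)) (etgt t)"

lemma as_edge_sel [simp]:
  "esrc (as_edge X t) = esrc t" "etgt (as_edge X t) = etgt t" "epred (as_edge X t) = epred t"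
  "egaps (as_edge X t) = egaps t" "elabels (as_edge X t) = (if elabels t = {} then {} else insert X (elabels t))"
  by (simp_all add: as_edge_def)

lemma steps_ok_as_edge [simp]: "steps_ok S k p (map (as_edge X) ts) = steps_ok S k p ts"
  by (induction ts arbitrary: k p) auto

lemma marks_as_edge: "marks k (map (as_edge X) ts) = (marks k ts)(X := (\<Union>Y. marks k ts Y))"
proof (induction ts arbitrary: k)
  case (Cons t ts)
  then show ?case by (auto simp: fun_eq_iff split: if_splits)
qed (simp add: fun_eq_iff)

lemma gsem_as: "gsem (map_edges (as_edge X) A) S = cas X ` gsem A S"
  by (rule gsem_map_edges[where Q = "\<lambda>_. True", simplified])
    (simp_all add: cev_def cas_def cstart_def cend_def cmu_def marks_as_edge)

definition filter_edge :: "'x \<Rightarrow> 'ev set \<Rightarrow> ('x, 'ev) edge \<Rightarrow> ('x, 'ev) edge" where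
  "filter_edge X P t =
     Edge (esrc t) (if X \<in> elabels t then epred t \<inter> P else epred t) (egaps t) (elabels t) (etgt t)"

lemma filter_edge_sel [simp]:
  "esrc (filter_edge X P t) = esrc t" "etgt (filter_edge X P t) = etgt t"
  "epred (filter_edge X P t) = (if X \<in> elabels t then epred t \<inter> P else epred t)"
  "egaps (filter_edge X P t) = egaps t" "elabels (filter_edge X P t) = elabels t"
  by (simp_all add: filter_edge_def)

lemma steps_ok_filter_edge:
  "steps_ok S k p (map (filter_edge X P) ts) \<longleftrightarrow> steps_ok S k p ts \<and> (\<forall>n\<in>marks k ts X. ev S n \<in> P)"
  by (induction ts arbitrary: k p) auto

lemma marks_filter_edge [simp]: "marks k (map (filter_edge X P) ts) = marks k ts"
  by (induction ts arbitrary: k) auto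

lemma gsem_filter:
  "gsem (map_edges (filter_edge X P) A) S = {C \<in> gsem A S. \<forall>k\<in>cmu C X. ev S k \<in> P}"
  by (rule gsem_map_edges[where g = id, simplified])
    (simp_all add: steps_ok_filter_edge cev_def cmu_def)

definition proj_edge :: "'x set \<Rightarrow> ('x, 'ev) edge \<Rightarrow> ('x, 'ev) edge" where
  "proj_edge L t = Edge (esrc t) (epred t) (egaps t) (elabels t \<inter> L) (etgt t)"

lemma proj_edge_sel [simp]:
  "esrc (proj_edge L t) = esrc t" "etgt (proj_edge L t) = etgt t" "epred (proj_edge L t) = epred t"
  "egaps (proj_edge L t) = egaps t" "elabels (proj_edge L t) = elabels t \<inter> L"
  by (simp_all add: proj_edge_def)

text \<open>Projection may erase the labels that gap guards refer to; it is only applied to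
  gap-free automata, where the guards are trivial.\<close>

lemma steps_ok_proj_edge:
  "gap_free (set ts) \<Longrightarrow> steps_ok S k p (map (proj_edge L) ts) = steps_ok S k p' ts"
  by (induction ts arbitrary: k p p') (auto simp: gap_free_def gaps_ok_def)

lemma marks_proj_edge: "marks k (map (proj_edge L) ts) = (\<lambda>X. if X \<in> L then marks k ts X else {})"
  by (induction ts arbitrary: k) (auto simp: fun_eq_iff)

lemma gsem_proj:
  assumes "gap_free (edges A)"
  shows "gsem (map_edges (proj_edge L) A) S = cproj L ` gsem A S"
proof (rule gsem_map_edges[where Q = "\<lambda>_. True", simplified])
  show "steps_ok S i None (map (proj_edge L) ts) = steps_ok S i None ts" if "reaches A ts W" for i ts W
    using that steps_ok_proj_edge gap_free_path[OF assms] unfolding reaches_def by blast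
next
  show "cev i (map (proj_edge L) ts) = cproj L (cev i ts)" for i ts
    unfolding cproj_def cev_sel by (simp add: cev_def marks_proj_edge)
qed simp

definition window_aut :: "interval \<Rightarrow> ('x, 'ev) gaut \<Rightarrow> ('x, 'ev) gaut" where
  "window_aut I A = GAut (edges A) ((\<lambda>(q, W). (q, I # W)) ` accepting A)"

lemma reaches_window_aut: "reaches (window_aut I A) ts W \<longleftrightarrow> (\<exists>W0. W = I # W0 \<and> reaches A ts W0)"
  unfolding reaches_def window_aut_def by auto

lemma accepts_window_aut:
  "accepts (window_aut I A) S i ts \<longleftrightarrow>
     accepts A S i ts \<and> in_ivl (tm S (cend (cev i ts)) - tm S (cstart (cev i ts))) I"
  unfolding accepts_def reaches_window_aut window_ok_def cev_sel by force

lemma gsem_window: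
  "gsem (window_aut I A) S = {C \<in> gsem A S. in_ivl (tm S (cend C) - tm S (cstart C)) I}"
  unfolding gsem_def accepts_window_aut by blast

section \<open>Union and product\<close>

definition rename :: "(nat \<Rightarrow> nat) \<Rightarrow> ('x, 'ev) edge \<Rightarrow> ('x, 'ev) edge" where
  "rename r t = Edge (r (esrc t)) (epred t) (egaps t) (elabels t) (r (etgt t))"

lemma rename_sel [simp]:
  "esrc (rename r t) = r (esrc t)" "etgt (rename r t) = r (etgt t)" "epred (rename r t) = epred t"
  "egaps (rename r t) = egaps t" "elabels (rename r t) = elabels t"
  by (simp_all add: rename_def)

lemma same_action_rename: "list_all2 same_action xs (map (rename r) xs)"
  by (rule same_action_map) (simp add: same_action_def)

lemma steps_ok_rename [simp]: "steps_ok S k p (map (rename r) ts) = steps_ok S k p ts"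
  using steps_ok_same_action[OF same_action_rename] by metis

lemma marks_rename [simp]: "marks k (map (rename r) ts) = marks k ts"
  using marks_same_action[OF same_action_rename] by metis

lemma cev_rename [simp]: "cev i (map (rename r) ts) = cev i ts"
  by (simp add: cev_def)

lemma path_rename_mono:
  "path E q ts q' \<Longrightarrow> rename r ` E \<subseteq> E' \<Longrightarrow> path E' (r q) (map (rename r) ts) (r q')"
  by (induction ts arbitrary: q) auto

lemma path_rename_inv:
  assumes "inj r" "path (rename r ` E) (r q) ts q'"
  shows "\<exists>ts0 q0. ts = map (rename r) ts0 \<and> path E q ts0 q0 \<and> q' = r q0"
  using path_image_inv[OF assms(1), of E "rename r"] assms(2) by simp

lemma path_stays_in_copy:
  assumes "inj r" "r 0 = 0" "\<forall>t\<in>E. etgt t \<noteq> 0" "\<forall>u\<in>U. \<forall>m. m \<noteq> 0 \<longrightarrow> esrc u \<noteq> r m"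
    and "path (rename r ` E \<union> U) 0 (t # ts) q" "t \<in> rename r ` E"
  obtains ts0 q0 where "t # ts = map (rename r) ts0" "path E 0 ts0 q0" "q = r q0"
proof -
  let ?inside = "\<lambda>n. \<exists>m. m \<noteq> 0 \<and> n = r m"
  have "\<forall>u\<in>rename r ` E \<union> U. ?inside (esrc u) \<longrightarrow> u \<in> rename r ` E \<and> ?inside (etgt u)"
    using assms(3,4) by auto
  moreover have "?inside (etgt t)" "esrc t = r 0" "path (rename r ` E \<union> U) (etgt t) ts q"
    using assms(2,3,5,6) by auto
  ultimately have "path (rename r ` E) (r 0) (t # ts) q"
    using path_invariant[of _ "etgt t" ts q ?inside] assms(6) by simp
  from path_rename_inv[OF assms(1) this] show ?thesis
    by (elim exE conjE) (rule that)
qed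

text \<open>The two copies of a union share the initial state 0 and are otherwise separated
  by parity; state 1 is kept free for the middle state of sequencing.\<close>

definition left_st :: "nat \<Rightarrow> nat" where
  "left_st n = 2 * n"

definition right_st :: "nat \<Rightarrow> nat" where
  "right_st n = (if n = 0 then 0 else 2 * n + 1)"

lemma inj_left_st: "inj left_st"
  by (auto simp: inj_def left_st_def)

lemma inj_right_st: "inj right_st"
  by (auto simp: inj_def right_st_def split: if_splits)

lemma left_st_0 [simp]: "left_st 0 = 0" and right_st_0 [simp]: "right_st 0 = 0"
  by (simp_all add: left_st_def right_st_def)

lemma left_st_eq_0 [simp]: "left_st n = 0 \<longleftrightarrow> n = 0" and right_st_eq_0 [simp]: "right_st n = 0 \<longleftrightarrow> n = 0"
  by (simp_all add: left_st_def right_st_def)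

lemma even_left_st [simp]: "even (left_st n)"
  by (simp add: left_st_def)

lemma odd_right_st: "n \<noteq> 0 \<Longrightarrow> odd (right_st n) \<and> right_st n \<noteq> 1"
  by (simp add: right_st_def)

lemma left_st_neq_right_st: "n \<noteq> 0 \<or> m \<noteq> 0 \<Longrightarrow> left_st n \<noteq> right_st m"
  unfolding left_st_def right_st_def by presburger

definition union_aut :: "('x, 'ev) gaut \<Rightarrow> ('x, 'ev) gaut \<Rightarrow> ('x, 'ev) gaut" where
  "union_aut A1 A2 = GAut (rename left_st ` edges A1 \<union> rename right_st ` edges A2)
     (apfst left_st ` accepting A1 \<union> apfst right_st ` accepting A2)"

lemma accepting_union_aut_left:
  assumes "proper A2"
  shows "(left_st q, W) \<in> accepting (union_aut A1 A2) \<longleftrightarrow> (q, W) \<in> accepting A1"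
proof -
  have "(left_st q, W) \<notin> apfst right_st ` accepting A2"
  proof
    assume "(left_st q, W) \<in> apfst right_st ` accepting A2"
    then obtain q2 where "(q2, W) \<in> accepting A2" "left_st q = right_st q2"
      by auto
    with assms show False
      using left_st_neq_right_st[of q q2] by (auto simp: proper_def)
  qed
  moreover have "(left_st q, W) \<in> apfst left_st ` accepting A1 \<longleftrightarrow> (q, W) \<in> accepting A1"
    using inj_image_mem_iff[of "apfst left_st" "(q, W)"] inj_left_st by simp
  ultimately show ?thesis
    by (simp add: union_aut_def)
qed

lemma accepting_union_aut_right:
  assumes "proper A1"
  shows "(right_st q, W) \<in> accepting (union_aut A1 A2) \<longleftrightarrow> (q, W) \<in> accepting A2"
proof -
  have "(right_st q, W) \<notin> apfst left_st ` accepting A1"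
  proof
    assume "(right_st q, W) \<in> apfst left_st ` accepting A1"
    then obtain q1 where "(q1, W) \<in> accepting A1" "right_st q = left_st q1"
      by auto
    with assms show False
      using left_st_neq_right_st[of q1 q] by (auto simp: proper_def)
  qed
  moreover have "(right_st q, W) \<in> apfst right_st ` accepting A2 \<longleftrightarrow> (q, W) \<in> accepting A2"
    using inj_image_mem_iff[of "apfst right_st" "(q, W)"] inj_right_st by simp
  ultimately show ?thesis
    by (simp add: union_aut_def)
qed

lemma path_union_aut:
  assumes "proper A1" "proper A2" "path (edges (union_aut A1 A2)) 0 (t # ts) q"
  obtains (left) ts0 q0 where "t # ts = map (rename left_st) ts0" "path (edges A1) 0 ts0 q0" "q = left_st q0"
  | (right) ts0 q0 where "t # ts = map (rename right_st) ts0" "path (edges A2) 0 ts0 q0" "q = right_st q0"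
proof -
  let ?L = "rename left_st ` edges A1" and ?R = "rename right_st ` edges A2"
  have tgt: "\<forall>t\<in>edges A1. etgt t \<noteq> 0" "\<forall>t\<in>edges A2. etgt t \<noteq> 0"
    using assms(1,2) by (auto simp: proper_def)
  have sep: "\<forall>u\<in>?R. \<forall>m. m \<noteq> 0 \<longrightarrow> esrc u \<noteq> left_st m" "\<forall>u\<in>?L. \<forall>m. m \<noteq> 0 \<longrightarrow> esrc u \<noteq> right_st m"
    by (metis imageE left_st_neq_right_st rename_sel(1))+
  have p: "path (?L \<union> ?R) 0 (t # ts) q" "path (?R \<union> ?L) 0 (t # ts) q"
    using assms(3) by (auto simp: union_aut_def Un_commute)
  then have "t \<in> ?L \<or> t \<in> ?R"
    by simp
  then show thesis
  proof
    assume "t \<in> ?L"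
    show thesis
      by (rule path_stays_in_copy[OF inj_left_st left_st_0 tgt(1) sep(1) p(1) \<open>t \<in> ?L\<close>]) (rule that(1))
  next
    assume "t \<in> ?R"
    show thesis
      by (rule path_stays_in_copy[OF inj_right_st right_st_0 tgt(2) sep(2) p(2) \<open>t \<in> ?R\<close>]) (rule that(2))
  qed
qed

lemma reaches_union_aut:
  assumes "proper A1" "proper A2"
  shows "reaches (union_aut A1 A2) ts W \<longleftrightarrow>
           (\<exists>ts0. ts = map (rename left_st) ts0 \<and> reaches A1 ts0 W) \<or>
           (\<exists>ts0. ts = map (rename right_st) ts0 \<and> reaches A2 ts0 W)"
proof
  assume "reaches (union_aut A1 A2) ts W"
  then obtain q where p: "path (edges (union_aut A1 A2)) 0 ts q" and q: "(q, W) \<in> accepting (union_aut A1 A2)"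
    unfolding reaches_def by blast
  have "ts \<noteq> []"
  proof
    assume "ts = []"
    with p q have "(left_st 0, W) \<in> accepting (union_aut A1 A2)"
      by simp
    with assms show False
      unfolding accepting_union_aut_left[OF assms(2)] by (auto simp: proper_def)
  qed
  then obtain t ts' where ts: "ts = t # ts'"
    by (cases ts) auto
  from assms p[unfolded ts] show "(\<exists>ts0. ts = map (rename left_st) ts0 \<and> reaches A1 ts0 W) \<or>
      (\<exists>ts0. ts = map (rename right_st) ts0 \<and> reaches A2 ts0 W)"
  proof (cases rule: path_union_aut)
    case (left ts0 q0)
    with q assms(2) show ?thesis
      unfolding reaches_def ts by (auto simp: accepting_union_aut_left)
  next
    case (right ts0 q0)
    with q assms(1) show ?thesis
      unfolding reaches_def ts by (auto simp: accepting_union_aut_right)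
  qed
next
  have sub: "rename left_st ` edges A1 \<subseteq> edges (union_aut A1 A2)" "rename right_st ` edges A2 \<subseteq> edges (union_aut A1 A2)"
    by (auto simp: union_aut_def)
  assume "(\<exists>ts0. ts = map (rename left_st) ts0 \<and> reaches A1 ts0 W) \<or>
          (\<exists>ts0. ts = map (rename right_st) ts0 \<and> reaches A2 ts0 W)"
  then show "reaches (union_aut A1 A2) ts W"
  proof (elim disjE exE conjE)
    fix ts0 assume ts: "ts = map (rename left_st) ts0" and "reaches A1 ts0 W"
    then obtain q where q: "path (edges A1) 0 ts0 q" "(q, W) \<in> accepting A1"
      unfolding reaches_def by blast
    then have "(left_st q, W) \<in> accepting (union_aut A1 A2)"
      using accepting_union_aut_left[OF assms(2)] by simp
    moreover have "path (edges (union_aut A1 A2)) 0 ts (left_st q)"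
      using path_rename_mono[OF q(1) sub(1)] ts by simp
    ultimately show ?thesis
      unfolding reaches_def by blast
  next
    fix ts0 assume ts: "ts = map (rename right_st) ts0" and "reaches A2 ts0 W"
    then obtain q where q: "path (edges A2) 0 ts0 q" "(q, W) \<in> accepting A2"
      unfolding reaches_def by blast
    then have "(right_st q, W) \<in> accepting (union_aut A1 A2)"
      using accepting_union_aut_right[OF assms(1)] by simp
    moreover have "path (edges (union_aut A1 A2)) 0 ts (right_st q)"
      using path_rename_mono[OF q(1) sub(2)] ts by simp
    ultimately show ?thesis
      unfolding reaches_def by blast
  qed
qed

lemma accepts_union_aut:
  assumes "proper A1" "proper A2"
  shows "accepts (union_aut A1 A2) S i ts \<longleftrightarrow>
           (\<exists>ts0. ts = map (rename left_st) ts0 \<and> accepts A1 S i ts0) \<or>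
           (\<exists>ts0. ts = map (rename right_st) ts0 \<and> accepts A2 S i ts0)"
  unfolding accepts_def reaches_union_aut[OF assms] by auto

lemma gsem_union:
  assumes "proper A1" "proper A2"
  shows "gsem (union_aut A1 A2) S = gsem A1 S \<union> gsem A2 S"
proof (intro set_eqI iffI)
  fix C assume "C \<in> gsem (union_aut A1 A2) S"
  then obtain i ts where "C = cev i ts" "accepts (union_aut A1 A2) S i ts"
    unfolding gsem_def by blast
  then show "C \<in> gsem A1 S \<union> gsem A2 S"
    unfolding accepts_union_aut[OF assms] gsem_def by (elim disjE exE conjE) auto
next
  fix C assume "C \<in> gsem A1 S \<union> gsem A2 S"
  then obtain i ts where "C = cev i ts" "accepts A1 S i ts \<or> accepts A2 S i ts"
    unfolding gsem_def by blast
  then have "C = cev i (map (rename left_st) ts) \<and> accepts (union_aut A1 A2) S i (map (rename left_st) ts) \<or>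
             C = cev i (map (rename right_st) ts) \<and> accepts (union_aut A1 A2) S i (map (rename right_st) ts)"
    unfolding accepts_union_aut[OF assms] by auto
  then show "C \<in> gsem (union_aut A1 A2) S"
    unfolding gsem_def by blast
qed

abbreviation same_labels :: "('x, 'ev) edge list \<Rightarrow> ('x, 'ev) edge list \<Rightarrow> bool" where
  "same_labels \<equiv> list_all2 (\<lambda>t u. elabels t = elabels u)"

lemma same_labels_length: "same_labels ts1 ts2 \<Longrightarrow> length ts2 = length ts1"
  by (simp add: list_all2_lengthD)

lemma marks_same_labels: "same_labels ts1 ts2 \<Longrightarrow> marks k ts1 = marks k ts2"
  by (induction ts1 ts2 arbitrary: k rule: list_all2_induct) auto

lemma same_labels_if_marks_eq:
  assumes "marks k ts1 = marks k ts2" "length ts1 = length ts2"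
  shows "same_labels ts1 ts2"
proof -
  have "elabels (ts1 ! m) = elabels (ts2 ! m)" if "m < length ts1" for m
    using assms that marks_iff[of "k + m" k ts1] marks_iff[of "k + m" k ts2] by auto
  then show ?thesis
    using assms(2) by (simp add: list_all2_conv_all_nth)
qed

definition pair_edge :: "('x, 'ev) edge \<Rightarrow> ('x, 'ev) edge \<Rightarrow> ('x, 'ev) edge" where
  "pair_edge t1 t2 = Edge (prod_encode (esrc t1, esrc t2)) (epred t1 \<inter> epred t2)
     (egaps t1 @ egaps t2) (elabels t1) (prod_encode (etgt t1, etgt t2))"

lemma pair_edge_sel [simp]:
  "esrc (pair_edge t1 t2) = prod_encode (esrc t1, esrc t2)"
  "etgt (pair_edge t1 t2) = prod_encode (etgt t1, etgt t2)"
  "epred (pair_edge t1 t2) = epred t1 \<inter> epred t2" "egaps (pair_edge t1 t2) = egaps t1 @ egaps t2"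
  "elabels (pair_edge t1 t2) = elabels t1"
  by (simp_all add: pair_edge_def)

lemma prod_encode_0_0 [simp]: "prod_encode (0, 0) = 0"
  by (simp add: prod_encode_def)

lemma prod_encode_eq_0: "prod_encode p = 0 \<longleftrightarrow> p = (0, 0)"
  using prod_encode_eq[of p "(0, 0)"] by simp

lemma prod_encode_pos: "0 < prod_encode p \<longleftrightarrow> p \<noteq> (0, 0)"
  using prod_encode_eq_0[of p] by auto

definition product_aut :: "('x, 'ev) gaut \<Rightarrow> ('x, 'ev) gaut \<Rightarrow> ('x, 'ev) gaut" where
  "product_aut A1 A2 =
     GAut {pair_edge t1 t2 | t1 t2. t1 \<in> edges A1 \<and> t2 \<in> edges A2 \<and> elabels t1 = elabels t2}
       {(prod_encode (q1, q2), W1 @ W2) | q1 W1 q2 W2. (q1, W1) \<in> accepting A1 \<and> (q2, W2) \<in> accepting A2}"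

lemma path_product_aut:
  "path (edges (product_aut A1 A2)) (prod_encode (q1, q2)) ts q \<longleftrightarrow>
     (\<exists>ts1 ts2 q1' q2'. same_labels ts1 ts2 \<and> ts = map2 pair_edge ts1 ts2 \<and>
        path (edges A1) q1 ts1 q1' \<and> path (edges A2) q2 ts2 q2' \<and> q = prod_encode (q1', q2'))"
proof (induction ts arbitrary: q1 q2)
  case Nil
  show ?case
    by (auto simp: prod_encode_eq intro!: exI[of _ "[]"])
next
  case (Cons t ts)
  show ?case
  proof
    assume "path (edges (product_aut A1 A2)) (prod_encode (q1, q2)) (t # ts) q"
    then obtain t1 t2 where t: "t = pair_edge t1 t2" "t1 \<in> edges A1" "t2 \<in> edges A2"
      "elabels t1 = elabels t2" "esrc t1 = q1" "esrc t2 = q2"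
      "path (edges (product_aut A1 A2)) (prod_encode (etgt t1, etgt t2)) ts q"
      by (auto simp: product_aut_def prod_encode_eq)
    moreover obtain ts1 ts2 q1' q2' where "same_labels ts1 ts2" "ts = map2 pair_edge ts1 ts2"
      "path (edges A1) (etgt t1) ts1 q1'" "path (edges A2) (etgt t2) ts2 q2'" "q = prod_encode (q1', q2')"
      using Cons.IH t(7) by blast
    ultimately show "\<exists>ts1 ts2 q1' q2'. same_labels ts1 ts2 \<and> t # ts = map2 pair_edge ts1 ts2 \<and>
        path (edges A1) q1 ts1 q1' \<and> path (edges A2) q2 ts2 q2' \<and> q = prod_encode (q1', q2')"
      by (intro exI[of _ "t1 # ts1"] exI[of _ "t2 # ts2"]) auto
  next
    assume "\<exists>ts1 ts2 q1' q2'. same_labels ts1 ts2 \<and> t # ts = map2 pair_edge ts1 ts2 \<and>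
        path (edges A1) q1 ts1 q1' \<and> path (edges A2) q2 ts2 q2' \<and> q = prod_encode (q1', q2')"
    then obtain ts1 ts2 q1' q2' where h: "same_labels ts1 ts2" "t # ts = map2 pair_edge ts1 ts2"
      "path (edges A1) q1 ts1 q1'" "path (edges A2) q2 ts2 q2'" "q = prod_encode (q1', q2')"
      by (elim exE conjE) (rule that; assumption)
    moreover from h(1,2) obtain t1 ts1' t2 ts2' where "ts1 = t1 # ts1'" "ts2 = t2 # ts2'"
      by (cases ts1; cases ts2) auto
    ultimately show "path (edges (product_aut A1 A2)) (prod_encode (q1, q2)) (t # ts) q"
      using Cons.IH[of "etgt t1" "etgt t2"]
      by (auto simp: product_aut_def)
  qed
qed

lemma reaches_product_aut:
  "reaches (product_aut A1 A2) ts W \<longleftrightarrow>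
     (\<exists>ts1 ts2 W1 W2. same_labels ts1 ts2 \<and> ts = map2 pair_edge ts1 ts2 \<and>
        reaches A1 ts1 W1 \<and> reaches A2 ts2 W2 \<and> W = W1 @ W2)"
proof -
  have acc: "(prod_encode (q1, q2), W) \<in> accepting (product_aut A1 A2) \<longleftrightarrow>
      (\<exists>W1 W2. W = W1 @ W2 \<and> (q1, W1) \<in> accepting A1 \<and> (q2, W2) \<in> accepting A2)" for q1 q2
    by (auto simp: product_aut_def prod_encode_eq)
  show ?thesis
  proof
    assume "reaches (product_aut A1 A2) ts W"
    then obtain q where "path (edges (product_aut A1 A2)) (prod_encode (0, 0)) ts q"
      "(q, W) \<in> accepting (product_aut A1 A2)"
      unfolding reaches_def by auto
    with acc show "\<exists>ts1 ts2 W1 W2. same_labels ts1 ts2 \<and> ts = map2 pair_edge ts1 ts2 \<and>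
        reaches A1 ts1 W1 \<and> reaches A2 ts2 W2 \<and> W = W1 @ W2"
      unfolding path_product_aut reaches_def by blast
  next
    assume "\<exists>ts1 ts2 W1 W2. same_labels ts1 ts2 \<and> ts = map2 pair_edge ts1 ts2 \<and>
        reaches A1 ts1 W1 \<and> reaches A2 ts2 W2 \<and> W = W1 @ W2"
    then obtain ts1 ts2 W1 W2 q1 q2 where "same_labels ts1 ts2" "ts = map2 pair_edge ts1 ts2"
      "path (edges A1) 0 ts1 q1" "(q1, W1) \<in> accepting A1"
      "path (edges A2) 0 ts2 q2" "(q2, W2) \<in> accepting A2" "W = W1 @ W2"
      unfolding reaches_def by blast
    then have "path (edges (product_aut A1 A2)) (prod_encode (0, 0)) ts (prod_encode (q1, q2))"
      "(prod_encode (q1, q2), W) \<in> accepting (product_aut A1 A2)"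
      unfolding path_product_aut acc by blast+
    then show "reaches (product_aut A1 A2) ts W"
      unfolding reaches_def by auto
  qed
qed

lemma steps_ok_pair_edge:
  "same_labels ts1 ts2 \<Longrightarrow>
     steps_ok S k p (map2 pair_edge ts1 ts2) \<longleftrightarrow> steps_ok S k p ts1 \<and> steps_ok S k p ts2"
  by (induction ts1 ts2 arbitrary: k p rule: list_all2_induct) (auto simp: gaps_ok_def)

lemma marks_pair_edge: "same_labels ts1 ts2 \<Longrightarrow> marks k (map2 pair_edge ts1 ts2) = marks k ts1"
  by (induction ts1 ts2 arbitrary: k rule: list_all2_induct) auto

lemma accepts_product_aut:
  "accepts (product_aut A1 A2) S i ts \<longleftrightarrow>
     (\<exists>ts1 ts2. same_labels ts1 ts2 \<and> ts = map2 pair_edge ts1 ts2 \<and>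
        accepts A1 S i ts1 \<and> accepts A2 S i ts2)"
proof -
  have "fits S i (map2 pair_edge ts1 ts2) \<longleftrightarrow> fits S i ts1" "fits S i ts2 \<longleftrightarrow> fits S i ts1"
    "window_ok S i (map2 pair_edge ts1 ts2) W \<longleftrightarrow> window_ok S i ts1 W"
    "window_ok S i ts2 W \<longleftrightarrow> window_ok S i ts1 W"
    if "same_labels ts1 ts2" for ts1 ts2 :: "('a, 'b) edge list" and W
    using same_labels_length[OF that] by (auto simp: fits_def window_ok_def)
  then show ?thesis
    unfolding accepts_def reaches_product_aut
    by (smt (verit) steps_ok_pair_edge window_ok_append)
qed

lemma cev_pair_edge:
  assumes "same_labels ts1 ts2"
  shows "cev i (map2 pair_edge ts1 ts2) = cev i ts1" "cev i ts2 = cev i ts1"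
proof -
  have "length ts2 = length ts1"
    using assms list_all2_lengthD by fastforce
  then show "cev i (map2 pair_edge ts1 ts2) = cev i ts1" "cev i ts2 = cev i ts1"
    using assms by (simp_all add: cev_def marks_pair_edge marks_same_labels)
qed

lemma gsem_product: "gsem (product_aut A1 A2) S = gsem A1 S \<inter> gsem A2 S"
proof (intro set_eqI iffI)
  fix C assume "C \<in> gsem (product_aut A1 A2) S"
  then obtain i ts1 ts2 where "C = cev i (map2 pair_edge ts1 ts2)" "same_labels ts1 ts2"
    "accepts A1 S i ts1" "accepts A2 S i ts2"
    unfolding gsem_def accepts_product_aut by blast
  then have "C = cev i ts1 \<and> accepts A1 S i ts1" "C = cev i ts2 \<and> accepts A2 S i ts2"
    using cev_pair_edge[of ts1 ts2 i] by simp_all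
  then show "C \<in> gsem A1 S \<inter> gsem A2 S"
    unfolding gsem_def by blast
next
  fix C assume "C \<in> gsem A1 S \<inter> gsem A2 S"
  then obtain i1 ts1 i2 ts2 where C: "C = cev i1 ts1" "accepts A1 S i1 ts1"
    "C = cev i2 ts2" "accepts A2 S i2 ts2"
    unfolding gsem_def by blast
  then have "i1 = i2" "length ts1 = length ts2" "marks i1 ts1 = marks i2 ts2"
    by (auto simp: cev_def accepts_def fits_def)
  then have same: "same_labels ts1 ts2"
    using same_labels_if_marks_eq by metis
  with C \<open>i1 = i2\<close> have "accepts (product_aut A1 A2) S i1 (map2 pair_edge ts1 ts2)"
    unfolding accepts_product_aut by blast
  moreover have "C = cev i1 (map2 pair_edge ts1 ts2)"
    using C(1) cev_pair_edge[OF same] by simp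
  ultimately show "C \<in> gsem (product_aut A1 A2) S"
    unfolding gsem_def by blast
qed

section \<open>Sequencing and iteration\<close>

definition skip_edge :: "('x, 'ev) edge" where
  "skip_edge = Edge 1 UNIV [] {} 1"

definition to_mid :: "('x, 'ev) edge \<Rightarrow> ('x, 'ev) edge" where
  "to_mid t = Edge (left_st (esrc t)) (epred t) (egaps t) (elabels t) 1"

definition redirect :: "interval list \<Rightarrow> ('x, 'ev) edge \<Rightarrow> ('x, 'ev) edge" where
  "redirect G u = Edge 1 (epred u) G (elabels u) (etgt u)"

lemma glue_edge_sel [simp]:
  "esrc skip_edge = 1" "etgt skip_edge = 1" "epred skip_edge = UNIV" "egaps skip_edge = []"
  "elabels skip_edge = {}"
  "esrc (to_mid t) = left_st (esrc t)" "etgt (to_mid t) = 1" "epred (to_mid t) = epred t"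
  "egaps (to_mid t) = egaps t" "elabels (to_mid t) = elabels t"
  "esrc (redirect G u) = 1" "etgt (redirect G u) = etgt u" "epred (redirect G u) = epred u"
  "egaps (redirect G u) = G" "elabels (redirect G u) = elabels u"
  by (simp_all add: skip_edge_def to_mid_def redirect_def)

text \<open>Sequencing and iteration reroute the accepting edges of the first automaton to the
  middle state 1, which may loop on \<open>skip_edge\<close> (for \<open>;\<close>, not for \<open>:\<close>) and is left by an
  initial edge of the second automaton; the gap guard \<open>G\<close> of the operator is placed on that
  edge, where the last labelled position is the end of the first match.\<close>

definition into_mid :: "('x, 'ev) gaut \<Rightarrow> ('x, 'ev) edge set" where
  "into_mid A = rename left_st ` edges A \<union> to_mid ` {t \<in> edges A. etgt t \<in> fst ` accepting A}"

definition glue_edges ::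
    "bool \<Rightarrow> interval list \<Rightarrow> ('x, 'ev) gaut \<Rightarrow> ('x, 'ev) edge set \<Rightarrow> ('x, 'ev) edge set" where
  "glue_edges sk G A B =
     into_mid A \<union> {t. t = skip_edge \<and> sk} \<union> redirect G ` {u \<in> B. esrc u = 0 \<and> egaps u = []}"

lemma path_to_mid:
  assumes "path (edges A) 0 (xs @ [x]) q" "q \<in> fst ` accepting A"
  shows "path (glue_edges sk G A B \<union> R) 0 (map (rename left_st) xs @ [to_mid x]) 1"
proof -
  have "path (edges A) 0 xs (esrc x)" "x \<in> edges A" "etgt x = q"
    using assms(1) by auto
  then have "path (glue_edges sk G A B \<union> R) (left_st 0) (map (rename left_st) xs) (left_st (esrc x))"
    by (intro path_rename_mono) (auto simp: glue_edges_def into_mid_def)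
  moreover have "to_mid x \<in> glue_edges sk G A B"
    using \<open>x \<in> edges A\<close> \<open>etgt x = q\<close> assms(2) by (auto simp: glue_edges_def into_mid_def)
  ultimately show ?thesis
    by auto
qed

lemma path_skips: "0 < n \<longrightarrow> sk \<Longrightarrow> path (glue_edges sk G A B \<union> R) 1 (replicate n skip_edge) 1"
  by (induction n) (auto simp: glue_edges_def)

lemma redirect_mem:
  "u \<in> B \<Longrightarrow> esrc u = 0 \<Longrightarrow> egaps u = [] \<Longrightarrow> redirect G u \<in> glue_edges sk G A B"
  by (auto simp: glue_edges_def)

lemma path_glue_before_mid:
  assumes "path (glue_edges sk G A B \<union> R) 0 ts q" "\<forall>u\<in>R. odd (esrc u)"
  obtains ts0 q0 where "ts = map (rename left_st) ts0" "path (edges A) 0 ts0 q0" "q = left_st q0"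
  | xs x rest where "ts = map (rename left_st) xs @ to_mid x # rest"
      "path (edges A) 0 (xs @ [x]) (etgt x)" "etgt x \<in> fst ` accepting A"
      "path (glue_edges sk G A B \<union> R) 1 rest q"
proof -
  let ?E = "glue_edges sk G A B \<union> R"
  have even: "{u \<in> ?E. even (esrc u) \<and> even (etgt u)} \<subseteq> rename left_st ` edges A"
    using assms(2) by (auto simp: glue_edges_def into_mid_def)
  have from_even: "t \<in> to_mid ` {t \<in> edges A. etgt t \<in> fst ` accepting A}"
    if "t \<in> ?E" "even (esrc t)" "odd (etgt t)" for t
    using that assms(2) by (auto simp: glue_edges_def into_mid_def)
  show ?thesis
    using assms(1) even_zero
  proof (cases rule: path_first_exit)
    case 1
    then have "path (rename left_st ` edges A) (left_st 0) ts q"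
      using path_mono[OF _ even] by simp
    with path_rename_inv[OF inj_left_st this] that(1) show ?thesis
      by blast
  next
    case (2 xs t ys)
    then have "path (rename left_st ` edges A) (left_st 0) xs (esrc t)"
      using path_mono[OF _ even] by simp
    with path_rename_inv[OF inj_left_st this] obtain xs0 p where
      xs0: "xs = map (rename left_st) xs0" "path (edges A) 0 xs0 p" "esrc t = left_st p"
      by blast
    obtain x where x: "t = to_mid x" "x \<in> edges A" "etgt x \<in> fst ` accepting A"
      using from_even 2 by blast
    have "esrc x = p"
      using xs0(3) x(1) inj_left_st by (simp add: inj_eq)
    with 2 xs0 x show ?thesis
      using that(2)[of xs0 x ys] by auto
  qed
qed

lemma path_glue_from_mid:
  assumes "path (glue_edges sk G A B \<union> R) 1 rest q" "q \<noteq> 1" "\<forall>u\<in>R. esrc u \<noteq> 1"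
  obtains n u zs where "rest = replicate n skip_edge @ redirect G u # zs" "0 < n \<longrightarrow> sk"
    "u \<in> B" "esrc u = 0" "egaps u = []" "path (glue_edges sk G A B \<union> R) (etgt u) zs q"
proof -
  let ?E = "glue_edges sk G A B \<union> R"
  have leave: "\<exists>u. t = redirect G u \<and> u \<in> B \<and> esrc u = 0 \<and> egaps u = []"
    if "t \<in> ?E" "esrc t = 1" "\<not> (sk \<and> t = skip_edge)" for t
    using that assms(3) by (auto simp: glue_edges_def into_mid_def left_st_def)
  have "\<exists>n u zs. rest = replicate n skip_edge @ redirect G u # zs \<and> (0 < n \<longrightarrow> sk) \<and>
          u \<in> B \<and> esrc u = 0 \<and> egaps u = [] \<and> path ?E (etgt u) zs q"
    using assms(1,2)
  proof (induction rest)
    case (Cons t rest)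
    show ?case
    proof (cases "sk \<and> t = skip_edge")
      case True
      with Cons obtain n u zs where "rest = replicate n skip_edge @ redirect G u # zs"
        "u \<in> B" "esrc u = 0" "egaps u = []" "path ?E (etgt u) zs q"
        by auto
      with True show ?thesis
        by (intro exI[of _ "Suc n"] exI[of _ u] exI[of _ zs]) auto
    next
      case False
      with Cons.prems leave obtain u where "t = redirect G u" "u \<in> B" "esrc u = 0" "egaps u = []"
        by auto
      with Cons.prems show ?thesis
        by (intro exI[of _ 0] exI[of _ u] exI[of _ rest]) auto
    qed
  qed simp
  with that show ?thesis
    by blast
qed

lemma initial_glue_edge:
  "u \<in> glue_edges sk G A B \<Longrightarrow> esrc u = 0 \<Longrightarrow> u \<in> into_mid A"
  by (auto simp: glue_edges_def)

lemma steps_ok_skips [simp]: "steps_ok S k p (replicate n skip_edge)"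
  by (induction n arbitrary: k) (auto simp: gaps_ok_def)

lemma last_mark_skips [simp]: "last_mark k p (replicate n skip_edge) = p"
  by (induction n arbitrary: k) auto

lemma marks_skips [simp]: "marks k (replicate n skip_edge) X = {}"
  by (induction n arbitrary: k) auto

lemma same_action_to_mid: "list_all2 same_action (xs @ [x]) (map (rename left_st) xs @ [to_mid x])"
  by (rule list_all2_appendI) (auto simp: same_action_rename same_action_def)

definition seq_rel :: "bool \<Rightarrow> 'ev tstream \<Rightarrow> interval list \<Rightarrow> 'x cevent \<Rightarrow> 'x cevent \<Rightarrow> bool" where
  "seq_rel sk S G C1 C2 \<longleftrightarrow> (if sk then cend C1 < cstart C2 else cend C1 + 1 = cstart C2) \<and>
     (\<forall>I\<in>set G. in_ivl (tm S (cstart C2) - tm S (cend C1)) I)"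

abbreviation gap_after :: "'ev tstream \<Rightarrow> interval list \<Rightarrow> nat \<Rightarrow> nat \<Rightarrow> bool" where
  "gap_after S G j j' \<equiv> \<forall>I\<in>set G. in_ivl (tm S j' - tm S j) I"

lemma seq_rel_cev:
  "xs \<noteq> [] \<Longrightarrow> seq_rel sk S G (cev i xs) (cev j ys) \<longleftrightarrow>
     (\<exists>n. j = i + length xs + n \<and> (0 < n \<longrightarrow> sk)) \<and> gap_after S G (i + length xs - 1) j"
  by (cases xs) (auto simp: seq_rel_def dest: less_imp_Suc_add)

text \<open>The gap guard of the glued run reads the last labelled position of the first part.\<close>

lemma steps_ok_glue:
  assumes "xs \<noteq> []" "G \<noteq> [] \<Longrightarrow> elabels (last xs) \<noteq> {}"
    and "list_all2 same_action xs xs'" "list_all2 same_action ys ys'"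
    and "epred y' = epred y" "elabels y' = elabels y" "egaps y = []" "egaps y' = G"
    and "elabels y \<noteq> {} \<or> gap_free (set ys)"
  shows "steps_ok S i None (xs' @ replicate n skip_edge @ y' # ys') \<longleftrightarrow>
           steps_ok S i None xs \<and> steps_ok S (i + length xs + n) None (y # ys) \<and>
           gap_after S G (i + length xs - 1) (i + length xs + n)"
proof -
  let ?j = "i + length xs + n"
  have "length xs' = length xs"
    using assms(3) by (simp add: list_all2_lengthD)
  then have steps: "steps_ok S i None (xs' @ replicate n skip_edge @ y' # ys') \<longleftrightarrow>
      steps_ok S i None xs \<and> steps_ok S ?j (last_mark i None xs) (y' # ys')"
    using steps_ok_same_action[OF assms(3)] last_mark_same_action[OF assms(3)] by (simp add: add.assoc)
  have gap: "gaps_ok S ?j (last_mark i None xs) G \<longleftrightarrow> gap_after S G (i + length xs - 1) ?j"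
  proof (cases "G = []")
    case False
    with assms(1,2) obtain xs0 x where "xs = xs0 @ [x]" "elabels x \<noteq> {}"
      by (metis append_butlast_last_id)
    with False show ?thesis
      by (simp add: gaps_ok_def)
  qed (simp add: gaps_ok_def)
  have tail: "steps_ok S (Suc ?j) (if elabels y = {} then p else Some ?j) ys' \<longleftrightarrow>
      steps_ok S (Suc ?j) (if elabels y = {} then None else Some ?j) ys" for p
    using assms(9) steps_ok_gap_free[of ys S "Suc ?j" p None] steps_ok_same_action[OF assms(4)] by auto
  have head: "steps_ok S ?j p (y' # ys') \<longleftrightarrow> ev S ?j \<in> epred y \<and> gaps_ok S ?j p G \<and>
      steps_ok S (Suc ?j) (if elabels y = {} then p else Some ?j) ys'" for p
    using assms(5,6,8) by simp
  have "steps_ok S ?j None (y # ys) \<longleftrightarrow>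
      ev S ?j \<in> epred y \<and> steps_ok S (Suc ?j) (if elabels y = {} then None else Some ?j) ys"
    using assms(7) by (simp add: gaps_ok_def)
  with steps head[of "last_mark i None xs"] gap tail[of "last_mark i None xs"] show ?thesis
    by blast
qed

lemma cev_glue:
  assumes "xs \<noteq> []" "list_all2 same_action xs xs'" "list_all2 same_action ys ys'" "elabels y' = elabels y"
  shows "cev i (xs' @ replicate n skip_edge @ y' # ys') = cunion (cev i xs) (cev (i + length xs + n) (y # ys))"
proof -
  have len: "length xs' = length xs" "length ys' = length ys"
    using assms(2,3) by (simp_all add: list_all2_lengthD)
  have "marks i (xs' @ replicate n skip_edge @ y' # ys') =
      (\<lambda>X. marks i xs X \<union> marks (i + length xs + n) (y # ys) X)"
    using marks_same_action[OF assms(2)] marks_same_action[OF assms(3)] len assms(4)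
    by (simp add: add.assoc fun_eq_iff)
  moreover have "0 < length xs"
    using assms(1) by simp
  ultimately show ?thesis
    using len by (simp add: cev_def cunion_def cstart_def cend_def cmu_def)
qed

lemma fits_glue:
  assumes "xs \<noteq> []" "length xs' = length xs" "length ys' = length ys"
  shows "fits S i (xs' @ replicate n skip_edge @ y' # ys') \<longleftrightarrow>
           fits S i xs \<and> fits S (i + length xs + n) (y # ys)"
  using assms by (auto simp: fits_def)

definition glued :: "('x, 'ev) edge list \<Rightarrow> ('x, 'ev) edge \<Rightarrow> nat \<Rightarrow> ('x, 'ev) edge \<Rightarrow>
    ('x, 'ev) edge list \<Rightarrow> ('x, 'ev) edge list" where
  "glued xs x n y ys = map (rename left_st) xs @ to_mid x # replicate n skip_edge @ y # ys"

lemma length_glued [simp]: "length (glued xs x n y ys) = length xs + 1 + n + 1 + length ys"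
  by (simp add: glued_def)

lemma path_glued:
  assumes "path (edges A) 0 (xs @ [x]) q" "q \<in> fst ` accepting A" "0 < n \<longrightarrow> sk"
    and "u \<in> B" "esrc u = 0" "egaps u = []" "path (glue_edges sk G A B \<union> R) (etgt u) ys q'"
  shows "path (glue_edges sk G A B \<union> R) 0 (glued xs x n (redirect G u) ys) q'"
  using path_to_mid[OF assms(1,2)] path_skips[OF assms(3)] redirect_mem[OF assms(4,5,6)] assms(7)
  unfolding glued_def by fastforce

lemma glued_fits_steps_ok:
  assumes "G \<noteq> [] \<Longrightarrow> elabels x \<noteq> {}" "list_all2 same_action (y # ys) (y' # ys')" "egaps y = []"
    and "elabels y \<noteq> {} \<or> gap_free (set ys)" and "j = i + length xs + 1 + n"
  shows "fits S i (glued xs x n (redirect G y') ys') \<and> steps_ok S i None (glued xs x n (redirect G y') ys') \<longleftrightarrow>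
           (fits S i (xs @ [x]) \<and> steps_ok S i None (xs @ [x])) \<and>
           (fits S j (y # ys) \<and> steps_ok S j None (y # ys)) \<and> gap_after S G (i + length xs) j"
proof -
  have y: "same_action y y'" and ys: "list_all2 same_action ys ys'"
    using assms(2) by simp_all
  have "glued xs x n (redirect G y') ys' =
      (map (rename left_st) xs @ [to_mid x]) @ replicate n skip_edge @ redirect G y' # ys'"
    by (simp add: glued_def)
  moreover have "length ys' = length ys"
    using ys by (simp add: list_all2_lengthD)
  ultimately show ?thesis
    using steps_ok_glue[OF _ _ same_action_to_mid ys, where G = G and y' = "redirect G y'"
        and y = y and S = S and i = i and n = n]
      fits_glue[where xs = "xs @ [x]" and xs' = "map (rename left_st) xs @ [to_mid x]" and ys' = ys'
        and ys = ys and S = S and i = i and n = n and y' = "redirect G y'" and y = y] assms y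
    by (auto simp: same_action_def)
qed

lemma cev_glued:
  "list_all2 same_action ys ys' \<Longrightarrow> elabels y' = elabels y \<Longrightarrow>
     cev i (glued xs x n y' ys') = cunion (cev i (xs @ [x])) (cev (i + length xs + 1 + n) (y # ys))"
  using cev_glue[OF _ same_action_to_mid, where ys = ys and ys' = ys' and y' = y' and y = y and i = i
      and n = n]
  unfolding glued_def by simp

definition seq_aut :: "bool \<Rightarrow> interval list \<Rightarrow> ('x, 'ev) gaut \<Rightarrow> ('x, 'ev) gaut \<Rightarrow> ('x, 'ev) gaut" where
  "seq_aut sk G A1 A2 =
     GAut (glue_edges sk G A1 (rename right_st ` edges A2) \<union> rename right_st ` {t \<in> edges A2. esrc t \<noteq> 0})
       ((\<lambda>(q, W). (right_st q, [])) ` accepting A2)"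

lemma path_right_copy:
  assumes "path (E \<union> rename right_st ` {t \<in> edges A. esrc t \<noteq> 0}) (right_st q) zs q'"
    and "q \<noteq> 0" "\<forall>t\<in>edges A. etgt t \<noteq> 0" "\<forall>u\<in>E. even (esrc u) \<or> esrc u = 1"
  obtains zs0 q0 where "zs = map (rename right_st) zs0" "path (edges A) q zs0 q0" "q' = right_st q0"
proof -
  let ?R = "rename right_st ` {t \<in> edges A. esrc t \<noteq> 0}"
  let ?inside = "\<lambda>n. \<exists>m. m \<noteq> 0 \<and> n = right_st m"
  have "u \<in> ?R \<and> ?inside (etgt u)" if "u \<in> E \<union> ?R" "?inside (esrc u)" for u
  proof -
    from that(2) obtain m where "m \<noteq> 0" "esrc u = right_st m"
      by blast
    then have "u \<notin> E"
      using assms(4) odd_right_st[of m] by auto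
    with that(1) obtain t where "t \<in> edges A" "esrc t \<noteq> 0" "u = rename right_st t"
      by blast
    with assms(3) show ?thesis
      by auto
  qed
  then have "path ?R (right_st q) zs q'"
    using path_invariant[OF assms(1), of ?inside ?R] assms(2) by blast
  from path_rename_inv[OF inj_right_st this] obtain zs0 q0 where
    "zs = map (rename right_st) zs0" "path {t \<in> edges A. esrc t \<noteq> 0} q zs0 q0" "q' = right_st q0"
    by blast
  with that show ?thesis
    using path_mono by blast
qed

lemma reaches_seq_aut:
  assumes "proper A1" "proper A2" "window_free A1" "window_free A2"
  shows "reaches (seq_aut sk G A1 A2) ts W \<longleftrightarrow> W = [] \<and>
           (\<exists>xs x n z zs. ts = glued xs x n (redirect G (rename right_st z)) (map (rename right_st) zs) \<and>
              reaches A1 (xs @ [x]) [] \<and> (0 < n \<longrightarrow> sk) \<and> reaches A2 (z # zs) [] \<and> egaps z = [])"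
    (is "?lhs \<longleftrightarrow> W = [] \<and> ?glue")
proof
  let ?B = "rename right_st ` edges A2" and ?R = "rename right_st ` {t \<in> edges A2. esrc t \<noteq> 0}"
  have tgt2: "\<forall>t\<in>edges A2. etgt t \<noteq> 0"
    using assms(2) by (simp add: proper_def)
  have R_odd: "\<forall>u\<in>?R. odd (esrc u)" and R_not_mid: "\<forall>u\<in>?R. esrc u \<noteq> 1"
    using odd_right_st by auto
  {
    assume ?lhs
    then obtain q2 W2 where p: "path (glue_edges sk G A1 ?B \<union> ?R) 0 ts (right_st q2)"
      and "(q2, W2) \<in> accepting A2" "W = []"
      unfolding reaches_def seq_aut_def by auto
    then have q2: "(q2, []) \<in> accepting A2" "W = []"
      using assms(4) by (auto simp: window_free_def)
    have "q2 \<noteq> 0"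
      using assms(2) q2(1) by (auto simp: proper_def)
    then have q2': "odd (right_st q2)" "right_st q2 \<noteq> 1"
      using odd_right_st by auto
    from p R_odd show "W = [] \<and> ?glue"
    proof (cases rule: path_glue_before_mid)
      case (1 ts0 q0)
      with q2' show ?thesis
        by simp
    next
      case (2 xs x rest)
      from 2(4) q2'(2) R_not_mid obtain n u zs where rest: "rest = replicate n skip_edge @ redirect G u # zs"
        "0 < n \<longrightarrow> sk" "u \<in> ?B" "esrc u = 0" "egaps u = []"
        "path (glue_edges sk G A1 ?B \<union> ?R) (etgt u) zs (right_st q2)"
        by (cases rule: path_glue_from_mid) auto
      then obtain z where z: "u = rename right_st z" "z \<in> edges A2" "esrc z = 0" "egaps z = []"
        by (auto simp: right_st_def split: if_splits)
      have glue_src: "\<forall>u\<in>glue_edges sk G A1 ?B. even (esrc u) \<or> esrc u = 1"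
        by (auto simp: glue_edges_def into_mid_def)
      have "path (glue_edges sk G A1 ?B \<union> ?R) (right_st (etgt z)) zs (right_st q2)" "etgt z \<noteq> 0"
        using rest(6) z(1,2) tgt2 by auto
      from path_right_copy[OF this tgt2 glue_src] obtain zs0 q0 where zs0: "zs = map (rename right_st) zs0"
        "path (edges A2) (etgt z) zs0 q0" "right_st q2 = right_st q0"
        by blast
      then have "reaches A2 (z # zs0) []"
        using q2 z inj_right_st by (auto simp: reaches_def inj_eq)
      moreover have "reaches A1 (xs @ [x]) []"
      proof -
        from 2(3) obtain W1 where "(etgt x, W1) \<in> accepting A1"
          by auto
        then have "(etgt x, []) \<in> accepting A1"
          using assms(3) by (auto simp: window_free_def)
        with 2(2) show ?thesis
          unfolding reaches_def by blast
      qed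
      ultimately show ?thesis
        using 2(1) rest(1,2) z(1,4) zs0(1) q2(2) unfolding glued_def
        by (intro conjI exI[of _ xs] exI[of _ x] exI[of _ n] exI[of _ z] exI[of _ zs0]) auto
    qed
  }
  assume "W = [] \<and> ?glue"
  then obtain xs x n z zs q1 q2 where W: "W = []"
    and ts: "ts = glued xs x n (redirect G (rename right_st z)) (map (rename right_st) zs)"
    and p1: "path (edges A1) 0 (xs @ [x]) q1" "(q1, []) \<in> accepting A1" and n: "0 < n \<longrightarrow> sk"
    and p2: "z \<in> edges A2" "esrc z = 0" "path (edges A2) (etgt z) zs q2" "(q2, []) \<in> accepting A2"
    and "egaps z = []"
    unfolding reaches_def by auto
  have "path {t \<in> edges A2. esrc t \<noteq> 0} (etgt z) zs q2"
    using path_nonzero[OF tgt2 p2(3)] tgt2 p2(1) by blast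
  then have "path (glue_edges sk G A1 ?B \<union> ?R) (right_st (etgt z)) (map (rename right_st) zs) (right_st q2)"
    by (rule path_rename_mono) blast
  with p1 n p2 \<open>egaps z = []\<close> have "path (glue_edges sk G A1 ?B \<union> ?R) 0 ts (right_st q2)"
    unfolding ts by (intro path_glued) force+
  with p2(4) W show ?lhs
    unfolding reaches_def seq_aut_def by force
qed

lemma gsem_seq:
  assumes "proper A1" "proper A2" "window_free A1" "window_free A2"
    and "G \<noteq> [] \<Longrightarrow> labelled_ends A1" "labelled_ends A2 \<or> gap_free (edges A2)"
  shows "gsem (seq_aut sk G A1 A2) S = seqop (seq_rel sk S G) (gsem A1 S) (gsem A2 S)"
proof -
  have glue: "fits S i (glued xs x n (redirect G (rename right_st z)) (map (rename right_st) zs)) \<and>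
      steps_ok S i None (glued xs x n (redirect G (rename right_st z)) (map (rename right_st) zs)) \<longleftrightarrow>
      accepts A1 S i (xs @ [x]) \<and> accepts A2 S (i + length xs + 1 + n) (z # zs) \<and>
      gap_after S G (i + length xs) (i + length xs + 1 + n)"
    if "reaches A1 (xs @ [x]) []" "reaches A2 (z # zs) []" "egaps z = []" for i xs x n z zs
  proof -
    have "G \<noteq> [] \<Longrightarrow> elabels x \<noteq> {}"
      using that(1) assms(5) labelled_ends_last by blast
    moreover have "elabels z \<noteq> {} \<or> gap_free (set zs)"
      using assms(6)
    proof
      assume "gap_free (edges A2)"
      from this that(2) have "gap_free (set (z # zs))"
        by (rule gap_free_reaches)
      then show ?thesis
        by (simp add: gap_free_def)
    qed (use that(2) labelled_ends_first in blast)
    ultimately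
    show ?thesis
      using glued_fits_steps_ok[OF _ same_action_rename[of "z # zs" right_st, unfolded list.map] that(3)] that(1,2)
      unfolding accepts_def by auto
  qed
  show ?thesis
  proof (intro set_eqI iffI)
    fix C
    assume "C \<in> gsem (seq_aut sk G A1 A2) S"
    then obtain i xs x n z zs where C: "C = cev i (glued xs x n (redirect G (rename right_st z)) (map (rename right_st) zs))"
      and parts: "reaches A1 (xs @ [x]) []" "reaches A2 (z # zs) []" "egaps z = []" "0 < n \<longrightarrow> sk"
      and "fits S i (glued xs x n (redirect G (rename right_st z)) (map (rename right_st) zs)) \<and>
        steps_ok S i None (glued xs x n (redirect G (rename right_st z)) (map (rename right_st) zs))"
      unfolding gsem_def accepts_def reaches_seq_aut[OF assms(1-4)] by blast
    with glue have acc: "accepts A1 S i (xs @ [x])" "accepts A2 S (i + length xs + 1 + n) (z # zs)"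
      and gap: "gap_after S G (i + length xs) (i + length xs + 1 + n)"
      by blast+
    have "C = cunion (cev i (xs @ [x])) (cev (i + length xs + 1 + n) (z # zs))"
      unfolding C by (rule cev_glued[OF same_action_rename]) simp
    moreover have "seq_rel sk S G (cev i (xs @ [x])) (cev (i + length xs + 1 + n) (z # zs))"
      using parts(4) gap by (subst seq_rel_cev) auto
    ultimately show "C \<in> seqop (seq_rel sk S G) (gsem A1 S) (gsem A2 S)"
      using acc unfolding seqop_def gsem_def by blast
  next
    fix C
    assume "C \<in> seqop (seq_rel sk S G) (gsem A1 S) (gsem A2 S)"
    then obtain i xs1 j ys where C: "C = cunion (cev i xs1) (cev j ys)"
      and acc: "accepts A1 S i xs1" "accepts A2 S j ys" and rel: "seq_rel sk S G (cev i xs1) (cev j ys)"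
      unfolding seqop_def gsem_def by blast
    obtain xs x z zs where xs1: "xs1 = xs @ [x]" and ys: "ys = z # zs"
      using acc by (metis accepts_def fits_def rev_exhaust neq_Nil_conv)
    obtain n where j: "j = i + length xs + 1 + n" and n: "0 < n \<longrightarrow> sk"
      and gap: "gap_after S G (i + length xs) j"
      using seq_rel_cev[of xs1 sk S G i j ys] rel xs1 by auto
    have parts: "reaches A1 (xs @ [x]) []" "reaches A2 (z # zs) []" "egaps z = []"
      using acc xs1 ys window_free_reaches[OF assms(3)] window_free_reaches[OF assms(4)]
        accepts_first_gap_free unfolding accepts_def by blast+
    let ?ts = "glued xs x n (redirect G (rename right_st z)) (map (rename right_st) zs)"
    have "fits S i ?ts \<and> steps_ok S i None ?ts"
      using glue[OF parts, of i n] acc gap unfolding xs1 ys j by blast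
    moreover have "reaches (seq_aut sk G A1 A2) ?ts []"
      using parts n unfolding reaches_seq_aut[OF assms(1-4)] by blast
    ultimately have "accepts (seq_aut sk G A1 A2) S i ?ts"
      unfolding accepts_def by auto
    moreover have "C = cev i (glued xs x n (redirect G (rename right_st z)) (map (rename right_st) zs))"
      unfolding C xs1 ys j by (rule cev_glued[OF same_action_rename, symmetric]) simp
    ultimately show "C \<in> gsem (seq_aut sk G A1 A2) S"
      unfolding gsem_def by blast
  qed
qed

lemma lfp_seqop_eqI:
  assumes "B \<union> seqop c B L \<subseteq> L" "\<forall>C\<in>L. cstart C \<le> cend C"
    and "\<And>C. C \<in> L \<Longrightarrow> C \<in> B \<or> (\<exists>C1\<in>B. \<exists>C2\<in>L. c C1 C2 \<and> C = cunion C1 C2 \<and>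
           cstart C < cstart C2 \<and> cend C2 = cend C)"
  shows "lfp (\<lambda>Y. B \<union> seqop c B Y) = L"
proof
  let ?F = "\<lambda>Y. B \<union> seqop c B Y"
  have mono: "mono ?F"
    unfolding mono_def seqop_def by blast
  show "lfp ?F \<subseteq> L"
    by (rule lfp_lowerbound) (rule assms(1))
  have "C \<in> lfp ?F" if "C \<in> L" for C
    using that
  proof (induction C rule: measure_induct_rule[where f = "\<lambda>C. cend C - cstart C"])
    case (less C)
    from assms(3)[OF less.prems] show ?case
    proof (elim disjE bexE conjE)
      assume "C \<in> B"
      then show ?thesis
        using lfp_unfold[OF mono] by blast
    next
      fix C1 C2
      assume C: "C1 \<in> B" "C2 \<in> L" "c C1 C2" "C = cunion C1 C2" "cstart C < cstart C2" "cend C2 = cend C"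
      moreover have "cstart C2 \<le> cend C2"
        using assms(2) C(2) by blast
      ultimately have "cend C2 - cstart C2 < cend C - cstart C"
        by linarith
      with less.IH C(2) have "C2 \<in> lfp ?F"
        by blast
      with C have "C \<in> seqop c B (lfp ?F)"
        unfolding seqop_def by blast
      then show ?thesis
        using lfp_unfold[OF mono] by blast
    qed
  qed
  then show "L \<subseteq> lfp ?F"
    by blast
qed

definition plus_aut :: "bool \<Rightarrow> interval list \<Rightarrow> ('x, 'ev) gaut \<Rightarrow> ('x, 'ev) gaut" where
  "plus_aut sk G A = GAut (glue_edges sk G A (into_mid A)) ((\<lambda>(q, W). (left_st q, [])) ` accepting A)"

lemma window_free_plus_aut: "window_free (plus_aut sk G A)"
  by (auto simp: window_free_def plus_aut_def)

lemma reaches_plus_aut: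
  assumes "proper A" "window_free A"
  shows "reaches (plus_aut sk G A) ts W \<longleftrightarrow> W = [] \<and>
           ((\<exists>ts0. ts = map (rename left_st) ts0 \<and> reaches A ts0 []) \<or>
            (\<exists>xs x n u ys. ts = glued xs x n (redirect G u) ys \<and> reaches A (xs @ [x]) [] \<and>
               (0 < n \<longrightarrow> sk) \<and> reaches (plus_aut sk G A) (u # ys) [] \<and> egaps u = []))"
    (is "?lhs \<longleftrightarrow> W = [] \<and> (?single \<or> ?glue)")
proof
  let ?E = "glue_edges sk G A (into_mid A)"
  have accepting: "(q, W) \<in> accepting (plus_aut sk G A) \<longleftrightarrow> W = [] \<and> (\<exists>q0. q = left_st q0 \<and> (q0, []) \<in> accepting A)"
    for q W
    using assms(2) by (force simp: plus_aut_def window_free_def)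
  {
    assume ?lhs
    then obtain q0 where p: "path (?E \<union> {}) 0 ts (left_st q0)" and q0: "(q0, []) \<in> accepting A" and W: "W = []"
      unfolding reaches_def accepting by (auto simp: plus_aut_def)
    have no_R: "\<forall>u\<in>{} :: ('a, 'b) edge set. odd (esrc u)" "\<forall>u\<in>{} :: ('a, 'b) edge set. esrc u \<noteq> 1"
      by simp_all
    from p no_R(1) show "W = [] \<and> (?single \<or> ?glue)"
    proof (cases rule: path_glue_before_mid)
      case (1 ts0 q1)
      with q0 W inj_left_st show ?thesis
        unfolding reaches_def by (auto simp: inj_eq)
    next
      case (2 xs x rest)
      have "left_st q0 \<noteq> 1"
        by (simp add: left_st_def)
      from 2(4) this no_R(2) obtain n u zs where rest: "rest = replicate n skip_edge @ redirect G u # zs"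
        "0 < n \<longrightarrow> sk" "u \<in> into_mid A" "esrc u = 0" "egaps u = []" "path (?E \<union> {}) (etgt u) zs (left_st q0)"
        by (cases rule: path_glue_from_mid) auto
      have "u \<in> ?E"
        using rest(3) by (simp add: glue_edges_def)
      with rest(4,6) q0 have "reaches (plus_aut sk G A) (u # zs) []"
        unfolding reaches_def accepting by (auto simp: plus_aut_def)
      moreover obtain W1 where "(etgt x, W1) \<in> accepting A"
        using 2(3) by auto
      with 2(2) assms(2) have "reaches A (xs @ [x]) []"
        unfolding reaches_def window_free_def by auto
      ultimately show ?thesis
        using 2(1) rest(1,2,5) W unfolding glued_def
        by (intro conjI disjI2 exI[of _ xs] exI[of _ x] exI[of _ n] exI[of _ u] exI[of _ zs]) auto
    qed
  }
  assume "W = [] \<and> (?single \<or> ?glue)"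
  then consider (single) ts0 q0 where "W = []" "ts = map (rename left_st) ts0" "path (edges A) 0 ts0 q0"
      "(q0, []) \<in> accepting A"
    | (glue) xs x n u ys q1 q where "W = []" "ts = glued xs x n (redirect G u) ys"
      "path (edges A) 0 (xs @ [x]) q1" "(q1, []) \<in> accepting A" "0 < n \<longrightarrow> sk"
      "path ?E 0 (u # ys) q" "(q, []) \<in> accepting (plus_aut sk G A)" "egaps u = []"
    unfolding reaches_def by (metis plus_aut_def gaut.sel(1))
  then show ?lhs
  proof cases
    case single
    have "path ?E (left_st 0) ts (left_st q0)"
      unfolding single(2) by (rule path_rename_mono[OF single(3)]) (auto simp: glue_edges_def into_mid_def)
    with single show ?thesis
      unfolding reaches_def accepting by (auto simp: plus_aut_def)
  next
    case glue
    then have "u \<in> into_mid A" "esrc u = 0" "path (?E \<union> {}) (etgt u) ys q"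
      using initial_glue_edge by auto
    then have "path (?E \<union> {}) 0 ts q"
      unfolding glue(2) using glue(3-5,8) by (intro path_glued) force+
    with glue show ?thesis
      unfolding reaches_def by (auto simp: plus_aut_def)
  qed
qed

lemma labelled_initial_into_mid: "labelled_ends A \<Longrightarrow> u \<in> into_mid A \<Longrightarrow> esrc u = 0 \<Longrightarrow> elabels u \<noteq> {}"
  unfolding labelled_ends_def into_mid_def by (auto simp: left_st_def)

lemma gap_free_glue_edges: "gap_free (edges A) \<Longrightarrow> gap_free (glue_edges sk [] A B)"
  unfolding gap_free_def glue_edges_def into_mid_def by auto

lemma plus_aut_glued_fits_steps_ok:
  assumes "labelled_ends A \<or> gap_free (edges A) \<and> G = []"
    and "reaches A (xs @ [x]) []" "reaches (plus_aut sk G A) (u # ys) []" "egaps u = []"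
  shows "fits S i (glued xs x n (redirect G u) ys) \<and> steps_ok S i None (glued xs x n (redirect G u) ys) \<longleftrightarrow>
           accepts A S i (xs @ [x]) \<and> accepts (plus_aut sk G A) S (i + length xs + 1 + n) (u # ys) \<and>
           gap_after S G (i + length xs) (i + length xs + 1 + n)"
proof -
  have "G \<noteq> [] \<Longrightarrow> elabels x \<noteq> {}"
    using assms(1,2) labelled_ends_last by blast
  moreover have "elabels u \<noteq> {} \<or> gap_free (set ys)"
    using assms(1)
  proof
    assume "labelled_ends A"
    moreover from assms(3) have "u \<in> glue_edges sk G A (into_mid A)" "esrc u = 0"
      unfolding reaches_def plus_aut_def by auto
    ultimately show ?thesis
      using labelled_initial_into_mid initial_glue_edge by blast
  next
    assume "gap_free (edges A) \<and> G = []"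
    then have "gap_free (edges (plus_aut sk G A))"
      using gap_free_glue_edges by (auto simp: plus_aut_def)
    from gap_free_reaches[OF this assms(3)] show ?thesis
      by (simp add: gap_free_def)
  qed
  ultimately show ?thesis
    using glued_fits_steps_ok[OF _ same_action_refl assms(4)] assms(2,3) unfolding accepts_def by auto
qed

lemma gsem_plus:
  assumes "proper A" "window_free A" "labelled_ends A \<or> gap_free (edges A) \<and> G = []"
  shows "gsem (plus_aut sk G A) S = lfp (\<lambda>Y. gsem A S \<union> seqop (seq_rel sk S G) (gsem A S) Y)"
proof (rule lfp_seqop_eqI[symmetric])
  let ?P = "plus_aut sk G A"
  show "gsem A S \<union> seqop (seq_rel sk S G) (gsem A S) (gsem ?P S) \<subseteq> gsem ?P S"
  proof (intro Un_least subsetI)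
    fix C assume "C \<in> gsem A S"
    then obtain i ts where "C = cev i ts" "accepts A S i ts"
      unfolding gsem_def by blast
    moreover from this(2) have "reaches A ts []"
      using window_free_reaches[OF assms(2)] unfolding accepts_def by blast
    then have "reaches ?P (map (rename left_st) ts) []"
      using reaches_plus_aut[OF assms(1,2)] by blast
    ultimately have "C = cev i (map (rename left_st) ts)" "accepts ?P S i (map (rename left_st) ts)"
      unfolding accepts_def by auto
    then show "C \<in> gsem ?P S"
      unfolding gsem_def by blast
  next
    fix C assume "C \<in> seqop (seq_rel sk S G) (gsem A S) (gsem ?P S)"
    then obtain i xs1 j ys1 where C: "C = cunion (cev i xs1) (cev j ys1)"
      and acc: "accepts A S i xs1" "accepts ?P S j ys1" and rel: "seq_rel sk S G (cev i xs1) (cev j ys1)"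
      unfolding seqop_def gsem_def by blast
    obtain xs x u ys where xs1: "xs1 = xs @ [x]" and ys1: "ys1 = u # ys"
      using acc by (metis accepts_def fits_def rev_exhaust neq_Nil_conv)
    obtain n where j: "j = i + length xs + 1 + n" and n: "0 < n \<longrightarrow> sk"
      and gap: "gap_after S G (i + length xs) j"
      using seq_rel_cev[of xs1 sk S G i j ys1] rel xs1 by auto
    have parts: "reaches A (xs @ [x]) []" "reaches ?P (u # ys) []" "egaps u = []"
      using acc xs1 ys1 window_free_reaches[OF assms(2)] window_free_reaches[OF window_free_plus_aut]
        accepts_first_gap_free unfolding accepts_def by blast+
    let ?ts = "glued xs x n (redirect G u) ys"
    have "fits S i ?ts \<and> steps_ok S i None ?ts"
      using plus_aut_glued_fits_steps_ok[OF assms(3) parts, of S i n] acc gap unfolding xs1 ys1 j by blast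
    moreover have "reaches ?P ?ts []"
      using parts n reaches_plus_aut[OF assms(1,2), of sk G ?ts "[]"] by blast
    ultimately have "accepts ?P S i ?ts"
      unfolding accepts_def by auto
    moreover have "C = cev i ?ts"
      unfolding C xs1 ys1 j by (rule cev_glued[OF same_action_refl, symmetric]) simp
    ultimately show "C \<in> gsem ?P S"
      unfolding gsem_def by blast
  qed
  show "\<forall>C\<in>gsem ?P S. cstart C \<le> cend C"
  proof
    fix C assume "C \<in> gsem ?P S"
    then obtain i ts where "C = cev i ts" "fits S i ts"
      unfolding gsem_def accepts_def by blast
    then show "cstart C \<le> cend C"
      by (cases ts) (auto simp: fits_def)
  qed
  fix C assume "C \<in> gsem ?P S"
  then obtain i ts where C: "C = cev i ts" "accepts ?P S i ts"
    unfolding gsem_def by blast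
  then have "reaches ?P ts []"
    using window_free_reaches[OF window_free_plus_aut] unfolding accepts_def by blast
  then consider (single) ts0 where "ts = map (rename left_st) ts0" "reaches A ts0 []"
    | (glue) xs x n u ys where "ts = glued xs x n (redirect G u) ys" "reaches A (xs @ [x]) []"
        "0 < n \<longrightarrow> sk" "reaches ?P (u # ys) []" "egaps u = []"
    using reaches_plus_aut[OF assms(1,2), of sk G ts "[]"] by blast
  then show "C \<in> gsem A S \<or> (\<exists>C1\<in>gsem A S. \<exists>C2\<in>gsem ?P S. seq_rel sk S G C1 C2 \<and>
      C = cunion C1 C2 \<and> cstart C < cstart C2 \<and> cend C2 = cend C)"
  proof cases
    case single
    with C have "C = cev i ts0" "accepts A S i ts0"
      unfolding accepts_def by auto
    then show ?thesis
      unfolding gsem_def by blast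
  next
    case glue
    let ?j = "i + length xs + 1 + n"
    have parts: "accepts A S i (xs @ [x])" "accepts ?P S ?j (u # ys)"
      and gap: "gap_after S G (i + length xs) ?j"
      using plus_aut_glued_fits_steps_ok[OF assms(3) glue(2,4,5), of S i n] C(2) glue(1)
      unfolding accepts_def by blast+
    have "C = cunion (cev i (xs @ [x])) (cev ?j (u # ys))"
      unfolding C glue(1) by (rule cev_glued[OF same_action_refl]) simp
    moreover have "seq_rel sk S G (cev i (xs @ [x])) (cev ?j (u # ys))"
      using glue(3) gap by (subst seq_rel_cev) auto
    moreover have "cstart C < cstart (cev ?j (u # ys))" "cend (cev ?j (u # ys)) = cend C"
      unfolding C glue(1) by simp_all
    ultimately show ?thesis
      using parts unfolding gsem_def by blast
  qed
qed

section \<open>Compiling windowed formulas\<close>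

lemma proper_atom_aut: "proper (atom_aut tp R)"
  by (simp add: proper_def atom_aut_def)

lemma proper_map_edges:
  "\<forall>t. esrc (f t) = esrc t \<and> etgt (f t) = etgt t \<Longrightarrow> proper A \<Longrightarrow> proper (map_edges f A)"
  by (auto simp: proper_def map_edges_def)

lemma proper_window_aut: "proper A \<Longrightarrow> proper (window_aut I A)"
  by (auto simp: proper_def window_aut_def)

lemma proper_union_aut: "proper A1 \<Longrightarrow> proper A2 \<Longrightarrow> proper (union_aut A1 A2)"
  by (auto simp: proper_def union_aut_def left_st_def right_st_def)

lemma proper_product_aut:
  assumes "proper A1" "proper A2"
  shows "proper (product_aut A1 A2)"
proof -
  have "{pair_edge t1 t2 | t1 t2. t1 \<in> edges A1 \<and> t2 \<in> edges A2 \<and> elabels t1 = elabels t2}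
      \<subseteq> case_prod pair_edge ` (edges A1 \<times> edges A2)"
    by auto
  then have "finite (edges (product_aut A1 A2))"
    using assms finite_subset unfolding proper_def product_aut_def by fastforce
  moreover have "{(prod_encode (q1, q2), W1 @ W2) | q1 W1 q2 W2. (q1, W1) \<in> accepting A1 \<and> (q2, W2) \<in> accepting A2}
      \<subseteq> (\<lambda>((q1, W1), (q2, W2)). (prod_encode (q1, q2), W1 @ W2)) ` (accepting A1 \<times> accepting A2)"
    by force
  then have "finite (accepting (product_aut A1 A2))"
    using assms finite_subset unfolding proper_def product_aut_def by fastforce
  ultimately show ?thesis
    using assms unfolding proper_def by (auto simp: product_aut_def prod_encode_eq_0 prod_encode_pos)
qed

lemma finite_glue_edges: "finite (edges A) \<Longrightarrow> finite B \<Longrightarrow> finite (glue_edges sk G A B)"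
  by (simp add: glue_edges_def into_mid_def)

lemma glue_edges_tgt:
  "\<forall>t\<in>edges A. etgt t \<noteq> 0 \<Longrightarrow> \<forall>u\<in>B. etgt u \<noteq> 0 \<Longrightarrow> \<forall>u\<in>glue_edges sk G A B. etgt u \<noteq> 0"
  by (auto simp: glue_edges_def into_mid_def left_st_def)

lemma proper_seq_aut:
  assumes "proper A1" "proper A2"
  shows "proper (seq_aut sk G A1 A2)"
proof -
  let ?B = "rename right_st ` edges A2"
  have fin: "finite (edges A1)" "finite ?B" and tgt: "\<forall>t\<in>edges A1. etgt t \<noteq> 0" "\<forall>u\<in>?B. etgt u \<noteq> 0"
    using assms by (auto simp: proper_def right_st_def)
  note finite_glue_edges[OF fin, of sk G] glue_edges_tgt[OF tgt, of sk G]
  with assms show ?thesis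
    unfolding proper_def seq_aut_def by (auto simp: right_st_def)
qed

lemma proper_plus_aut:
  assumes "proper A"
  shows "proper (plus_aut sk G A)"
proof -
  have fin: "finite (edges A)" "finite (into_mid A)"
    and tgt: "\<forall>t\<in>edges A. etgt t \<noteq> 0" "\<forall>u\<in>into_mid A. etgt u \<noteq> 0"
    using assms by (auto simp: proper_def into_mid_def left_st_def)
  note finite_glue_edges[OF fin, of sk G] glue_edges_tgt[OF tgt, of sk G]
  with assms show ?thesis
    unfolding proper_def plus_aut_def by (auto simp: left_st_def)
qed

lemma window_free_atom_aut: "window_free (atom_aut tp R)"
  by (simp add: window_free_def atom_aut_def)

lemma window_free_map_edges: "window_free A \<Longrightarrow> window_free (map_edges f A)"
  by (simp add: window_free_def map_edges_def)

lemma window_free_union_aut: "window_free A1 \<Longrightarrow> window_free A2 \<Longrightarrow> window_free (union_aut A1 A2)"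
  by (auto simp: window_free_def union_aut_def)

lemma window_free_product_aut: "window_free A1 \<Longrightarrow> window_free A2 \<Longrightarrow> window_free (product_aut A1 A2)"
  by (auto simp: window_free_def product_aut_def)

lemma window_free_seq_aut: "window_free (seq_aut sk G A1 A2)"
  by (auto simp: window_free_def seq_aut_def)

lemma gap_free_atom_aut: "gap_free (edges (atom_aut tp R))"
  by (simp add: gap_free_def atom_aut_def)

lemma gap_free_map_edges:
  "\<forall>t. egaps (f t) = egaps t \<Longrightarrow> gap_free (edges A) \<Longrightarrow> gap_free (edges (map_edges f A))"
  by (simp add: gap_free_def map_edges_def)

lemma gap_free_union_aut:
  "gap_free (edges A1) \<Longrightarrow> gap_free (edges A2) \<Longrightarrow> gap_free (edges (union_aut A1 A2))"
  by (auto simp: gap_free_def union_aut_def)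

lemma gap_free_product_aut:
  "gap_free (edges A1) \<Longrightarrow> gap_free (edges A2) \<Longrightarrow> gap_free (edges (product_aut A1 A2))"
  by (auto simp: gap_free_def product_aut_def)

lemma gap_free_seq_aut:
  "gap_free (edges A1) \<Longrightarrow> gap_free (edges A2) \<Longrightarrow> gap_free (edges (seq_aut sk [] A1 A2))"
  using gap_free_glue_edges[of A1 sk "rename right_st ` edges A2"]
  by (auto simp: gap_free_def seq_aut_def)

lemma gap_free_plus_aut: "gap_free (edges A) \<Longrightarrow> gap_free (edges (plus_aut sk [] A))"
  using gap_free_glue_edges by (simp add: plus_aut_def)

lemma labelled_ends_atom_aut: "labelled_ends (atom_aut tp R)"
  by (simp add: labelled_ends_def atom_aut_def)

lemma labelled_ends_map_edges:
  assumes "\<forall>t. esrc (f t) = esrc t \<and> etgt (f t) = etgt t \<and> (elabels t \<noteq> {} \<longrightarrow> elabels (f t) \<noteq> {})"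
  shows "labelled_ends A \<Longrightarrow> labelled_ends (map_edges f A)"
  using assms by (auto simp: labelled_ends_def map_edges_def)

lemma labelled_ends_union_aut:
  assumes "proper A1" "proper A2" "labelled_ends A1" "labelled_ends A2"
  shows "labelled_ends (union_aut A1 A2)"
  unfolding labelled_ends_def
proof (intro ballI impI)
  fix u assume u: "u \<in> edges (union_aut A1 A2)"
    and h: "esrc u = 0 \<or> etgt u \<in> fst ` accepting (union_aut A1 A2)"
  from u consider (left) t where "t \<in> edges A1" "u = rename left_st t"
    | (right) t where "t \<in> edges A2" "u = rename right_st t"
    by (auto simp: union_aut_def)
  then show "elabels u \<noteq> {}"
  proof cases
    case left
    with h assms(2,3) show ?thesis
      by (auto simp: labelled_ends_def fst_eq_Domain Domain_iff accepting_union_aut_left)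
  next
    case right
    with h assms(1,4) show ?thesis
      by (auto simp: labelled_ends_def fst_eq_Domain Domain_iff accepting_union_aut_right)
  qed
qed

lemma labelled_ends_product_aut:
  "labelled_ends A1 \<Longrightarrow> labelled_ends (product_aut A1 A2)"
  by (force simp: labelled_ends_def product_aut_def prod_encode_eq_0)

lemma labelled_ends_seq_aut:
  assumes "proper A2" "labelled_ends A1" "labelled_ends A2"
  shows "labelled_ends (seq_aut sk G A1 A2)"
  unfolding labelled_ends_def
proof (intro ballI impI)
  have acc: "fst ` accepting (seq_aut sk G A1 A2) = right_st ` fst ` accepting A2"
    by (force simp: seq_aut_def)
  have nz: "q \<noteq> 0" if "q \<in> fst ` accepting A2" for q
    using assms(1) that by (auto simp: proper_def)
  fix u assume u: "u \<in> edges (seq_aut sk G A1 A2)"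
    and h: "esrc u = 0 \<or> etgt u \<in> fst ` accepting (seq_aut sk G A1 A2)"
  from u consider (left) t where "t \<in> edges A1" "u = rename left_st t"
    | (mid) t where "t \<in> edges A1" "etgt t \<in> fst ` accepting A1" "u = to_mid t"
    | (skip) "u = skip_edge"
    | (redirect) z where "z \<in> edges A2" "esrc z = 0" "u = redirect G (rename right_st z)"
    | (right) t where "t \<in> edges A2" "esrc t \<noteq> 0" "u = rename right_st t"
    by (auto simp: seq_aut_def glue_edges_def into_mid_def)
  then show "elabels u \<noteq> {}"
  proof cases
    case left
    have "left_st (etgt t) \<notin> right_st ` fst ` accepting A2"
    proof
      assume "left_st (etgt t) \<in> right_st ` fst ` accepting A2"
      then obtain q where "q \<in> fst ` accepting A2" "left_st (etgt t) = right_st q"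
        by (rule imageE)
      with nz left_st_neq_right_st show False
        by metis
    qed
    with left h acc assms(2) show ?thesis
      by (auto simp: labelled_ends_def)
  next
    case mid
    with assms(2) show ?thesis
      by (auto simp: labelled_ends_def)
  next
    case skip
    have "1 \<notin> right_st ` fst ` accepting A2"
    proof
      assume "1 \<in> right_st ` fst ` accepting A2"
      then obtain q where "q \<in> fst ` accepting A2" "1 = right_st q"
        by (rule imageE)
      with nz odd_right_st show False
        by metis
    qed
    with skip h acc show ?thesis
      by simp
  next
    case redirect
    with assms(3) show ?thesis
      by (auto simp: labelled_ends_def)
  next
    case right
    with h acc assms(3) inj_right_st show ?thesis
      by (auto simp: labelled_ends_def inj_image_mem_iff)
  qed
qed

lemma labelled_ends_plus_aut:
  assumes "labelled_ends A"
  shows "labelled_ends (plus_aut sk G A)"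
  unfolding labelled_ends_def
proof (intro ballI impI)
  have acc: "fst ` accepting (plus_aut sk G A) = left_st ` fst ` accepting A"
    by (force simp: plus_aut_def)
  fix u assume u: "u \<in> edges (plus_aut sk G A)"
    and h: "esrc u = 0 \<or> etgt u \<in> fst ` accepting (plus_aut sk G A)"
  from u consider (into_mid) "u \<in> into_mid A" | (skip) "u = skip_edge"
    | (redirect) v where "v \<in> into_mid A" "esrc v = 0" "u = redirect G v"
    by (auto simp: plus_aut_def glue_edges_def)
  then show "elabels u \<noteq> {}"
  proof cases
    case into_mid
    then consider (left) t where "t \<in> edges A" "u = rename left_st t"
      | (mid) t where "t \<in> edges A" "etgt t \<in> fst ` accepting A" "u = to_mid t"
      by (auto simp: into_mid_def)
    then show ?thesis
    proof cases
      case left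
      with h acc assms inj_left_st show ?thesis
        by (auto simp: labelled_ends_def inj_image_mem_iff)
    next
      case mid
      with assms show ?thesis
        by (auto simp: labelled_ends_def)
    qed
  next
    case skip
    with h acc show ?thesis
      by (auto simp: left_st_def)
  next
    case redirect
    with assms show ?thesis
      using labelled_initial_into_mid by simp
  qed
qed

lemma gaut_wf_atom_aut: "{e. tp e = R} \<in> Ps \<Longrightarrow> gaut_wf Ps (atom_aut tp R)"
  by (simp add: gaut_wf_def atom_aut_def)

lemma gaut_wf_map_edges:
  "\<forall>t. egaps (f t) = egaps t \<and> (epred t \<in> Ps \<longrightarrow> epred (f t) \<in> Ps) \<Longrightarrow> gaut_wf Ps A \<Longrightarrow>
     gaut_wf Ps (map_edges f A)"
  by (simp add: gaut_wf_def map_edges_def)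

lemma gaut_wf_window_aut: "ivl_wf I \<Longrightarrow> gaut_wf Ps A \<Longrightarrow> gaut_wf Ps (window_aut I A)"
  by (auto simp: gaut_wf_def window_aut_def)

lemma gaut_wf_union_aut: "gaut_wf Ps A1 \<Longrightarrow> gaut_wf Ps A2 \<Longrightarrow> gaut_wf Ps (union_aut A1 A2)"
  by (auto simp: gaut_wf_def union_aut_def)

lemma gaut_wf_product_aut:
  "\<forall>P\<in>Ps. \<forall>P'\<in>Ps. P \<inter> P' \<in> Ps \<Longrightarrow> gaut_wf Ps A1 \<Longrightarrow> gaut_wf Ps A2 \<Longrightarrow>
     gaut_wf Ps (product_aut A1 A2)"
  by (auto simp: gaut_wf_def product_aut_def)

lemma gaut_wf_glue_edges:
  assumes "UNIV \<in> Ps" "\<forall>I\<in>set G. ivl_wf I" "gaut_wf Ps A"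
    and "\<forall>u\<in>B. epred u \<in> Ps"
  shows "\<forall>t\<in>glue_edges sk G A B. epred t \<in> Ps \<and> (\<forall>I\<in>set (egaps t). ivl_wf I)"
  using assms by (auto simp: gaut_wf_def glue_edges_def into_mid_def)

lemma gaut_wf_seq_aut:
  assumes "UNIV \<in> Ps" "\<forall>I\<in>set G. ivl_wf I" "gaut_wf Ps A1" "gaut_wf Ps A2"
  shows "gaut_wf Ps (seq_aut sk G A1 A2)"
proof -
  have "\<forall>u\<in>rename right_st ` edges A2. epred u \<in> Ps"
    using assms(4) by (auto simp: gaut_wf_def)
  from gaut_wf_glue_edges[OF assms(1-3) this] assms(4) show ?thesis
    by (auto simp: gaut_wf_def seq_aut_def)
qed

lemma gaut_wf_plus_aut:
  assumes "UNIV \<in> Ps" "\<forall>I\<in>set G. ivl_wf I" "gaut_wf Ps A"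
  shows "gaut_wf Ps (plus_aut sk G A)"
proof -
  have "\<forall>u\<in>into_mid A. epred u \<in> Ps"
    using assms(3) by (auto simp: gaut_wf_def into_mid_def)
  from gaut_wf_glue_edges[OF assms this] show ?thesis
    by (auto simp: gaut_wf_def plus_aut_def)
qed

primrec compile :: "('ev \<Rightarrow> 'x) \<Rightarrow> ('x, 'ev) tcel \<Rightarrow> ('x, 'ev) gaut" where
  "compile tp (CAtom R) = atom_aut tp R"
| "compile tp (CAs f X) = map_edges (as_edge X) (compile tp f)"
| "compile tp (CFilter f X P) = map_edges (filter_edge X P) (compile tp f)"
| "compile tp (COr f g) = union_aut (compile tp f) (compile tp g)"
| "compile tp (CAnd f g) = product_aut (compile tp f) (compile tp g)"
| "compile tp (CSeq f g) = seq_aut True [] (compile tp f) (compile tp g)"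
| "compile tp (CNext f g) = seq_aut False [] (compile tp f) (compile tp g)"
| "compile tp (CPlus f) = plus_aut True [] (compile tp f)"
| "compile tp (COPlus f) = plus_aut False [] (compile tp f)"
| "compile tp (CProj L f) = map_edges (proj_edge L) (compile tp f)"
| "compile tp (CWin f I) = window_aut I (compile tp f)"
| "compile tp (CSeqI f I g) = seq_aut True [I] (compile tp f) (compile tp g)"
| "compile tp (CNextI f I g) = seq_aut False [I] (compile tp f) (compile tp g)"
| "compile tp (CPlusI f I) = plus_aut True [I] (compile tp f)"
| "compile tp (COPlusI f I) = plus_aut False [I] (compile tp f)"

lemma proper_compile: "proper (compile tp \<phi>)"
  by (induction \<phi>) (simp_all add: proper_atom_aut proper_map_edges proper_window_aut
      proper_union_aut proper_product_aut proper_seq_aut proper_plus_aut)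

lemma window_free_compile: "no_time \<phi> \<or> simple \<phi> \<Longrightarrow> window_free (compile tp \<phi>)"
  by (induction \<phi>) (auto simp: window_free_atom_aut window_free_map_edges window_free_union_aut
      window_free_product_aut window_free_seq_aut window_free_plus_aut)

lemma gap_free_compile: "no_time \<phi> \<Longrightarrow> gap_free (edges (compile tp \<phi>))"
  by (induction \<phi>) (simp_all add: gap_free_atom_aut gap_free_map_edges gap_free_union_aut
      gap_free_product_aut gap_free_seq_aut gap_free_plus_aut)

lemma labelled_ends_compile: "simple \<phi> \<Longrightarrow> labelled_ends (compile tp \<phi>)"
  by (induction \<phi>) (simp_all add: labelled_ends_atom_aut labelled_ends_map_edges labelled_ends_union_aut
      labelled_ends_product_aut labelled_ends_seq_aut labelled_ends_plus_aut proper_compile)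

lemma gaut_wf_compile:
  assumes "UNIV \<in> Ps" "\<forall>P\<in>Ps. \<forall>P'\<in>Ps. P \<inter> P' \<in> Ps" "\<forall>R\<in>T. {e. tp e = R} \<in> Ps"
  shows "cel_wf T Ps \<phi> \<Longrightarrow> gaut_wf Ps (compile tp \<phi>)"
  by (induction \<phi>) (simp_all add: assms gaut_wf_atom_aut gaut_wf_map_edges gaut_wf_window_aut
      gaut_wf_union_aut gaut_wf_product_aut gaut_wf_seq_aut gaut_wf_plus_aut)

lemma seq_rel_Nil: "seq_rel True S [] = seq_c" "seq_rel False S [] = next_c"
  by (auto simp: fun_eq_iff seq_rel_def seq_c_def next_c_def)

lemma seq_rel_single:
  "seq_rel True S [I] = (\<lambda>C1 C2. seq_c C1 C2 \<and> gap_in S I C1 C2)"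
  "seq_rel False S [I] = (\<lambda>C1 C2. next_c C1 C2 \<and> gap_in S I C1 C2)"
  by (auto simp: fun_eq_iff seq_rel_def seq_c_def next_c_def gap_in_def)

lemma gsem_seq_compile:
  assumes "no_time f \<or> simple f" "no_time g \<or> simple g" "G \<noteq> [] \<Longrightarrow> simple f"
  shows "gsem (seq_aut sk G (compile tp f) (compile tp g)) S =
           seqop (seq_rel sk S G) (gsem (compile tp f) S) (gsem (compile tp g) S)"
  using assms by (intro gsem_seq)
    (auto simp: proper_compile window_free_compile labelled_ends_compile gap_free_compile)

lemma gsem_plus_compile:
  assumes "no_time f \<or> simple f" "G \<noteq> [] \<Longrightarrow> simple f"
  shows "gsem (plus_aut sk G (compile tp f)) S =
           lfp (\<lambda>Y. gsem (compile tp f) S \<union> seqop (seq_rel sk S G) (gsem (compile tp f) S) Y)"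
  using assms by (cases "G = []"; intro gsem_plus)
    (auto simp: proper_compile window_free_compile labelled_ends_compile gap_free_compile)

lemma gsem_compile_untimed_or_simple:
  "no_time \<phi> \<or> simple \<phi> \<Longrightarrow> gsem (compile tp \<phi>) S = cel_sem tp S \<phi>"
proof (induction \<phi>)
  case (CSeq f g)
  then show ?case
    using gsem_seq_compile[of f g "[]"] by (auto simp: seq_rel_Nil)
next
  case (CNext f g)
  then show ?case
    using gsem_seq_compile[of f g "[]"] by (auto simp: seq_rel_Nil)
next
  case (CSeqI f I g)
  then show ?case
    using gsem_seq_compile[of f g "[I]"] by (auto simp: seq_rel_single)
next
  case (CNextI f I g)
  then show ?case
    using gsem_seq_compile[of f g "[I]"] by (auto simp: seq_rel_single)
next
  case (CPlus f)
  then show ?case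
    using gsem_plus_compile[of f "[]"] by (auto simp: seq_rel_Nil)
next
  case (COPlus f)
  then show ?case
    using gsem_plus_compile[of f "[]"] by (auto simp: seq_rel_Nil)
next
  case (CPlusI f I)
  then show ?case
    using gsem_plus_compile[of f "[I]"] by (auto simp: seq_rel_single)
next
  case (COPlusI f I)
  then show ?case
    using gsem_plus_compile[of f "[I]"] by (auto simp: seq_rel_single)
qed (auto simp: gsem_atom gsem_as gsem_filter gsem_union proper_compile gsem_product gsem_proj
    gap_free_compile)

lemma gsem_compile: "windowed \<phi> \<Longrightarrow> gsem (compile tp \<phi>) S = cel_sem tp S \<phi>"
  by (induction rule: windowed.induct) (simp_all add: gsem_compile_untimed_or_simple gsem_as
      gsem_filter gsem_union proper_compile gsem_product gsem_window)

section \<open>Timed CEA with two clocks\<close>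

lemma tm_Suc_mono:
  assumes "timed_stream S" "Suc k \<le> length S"
  shows "tm S k \<le> tm S (Suc k)"
proof (cases k)
  case 0
  with assms have "0 \<le> snd (S ! 0)"
    unfolding timed_stream_def by (meson Suc_le_lessD)
  with 0 show ?thesis
    by (simp add: tm_def)
next
  case (Suc k')
  with assms have "snd (S ! k') < snd (S ! k)"
    unfolding timed_stream_def by simp
  with Suc show ?thesis
    by (simp add: tm_def)
qed

lemma tm_mono:
  assumes "timed_stream S" "a \<le> b" "b \<le> length S"
  shows "tm S a \<le> tm S b"
  using assms(2)
proof (induction b rule: dec_induct)
  case (step n)
  then show ?case
    using tm_Suc_mono[OF assms(1), of n] assms(3) by simp
qed simp

fun ivl_guard :: "nat \<Rightarrow> interval \<Rightarrow> nat guard" where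
  "ivl_guard z (Ivl a ac u) = GAnd (GCmp z (if ac then CmpGe else CmpGt) a)
     (case u of None \<Rightarrow> GTrue | Some (b, bc) \<Rightarrow> GCmp z (if bc then CmpLe else CmpLt) b)"

fun ivls_guard :: "nat \<Rightarrow> interval list \<Rightarrow> nat guard" where
  "ivls_guard z [] = GTrue"
| "ivls_guard z (I # Is) = GAnd (ivl_guard z I) (ivls_guard z Is)"

lemma gclocks_ivls_guard: "gclocks (ivls_guard z Is) = (if Is = [] then {} else {z})"
proof (induction Is)
  case (Cons I Is)
  then show ?case
    by (cases I) (auto split: option.splits)
qed simp

lemma gconsts_ok_ivls_guard: "\<forall>I\<in>set Is. ivl_wf I \<Longrightarrow> gconsts_ok (ivls_guard z Is)"
proof (induction Is)
  case (Cons I Is)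
  then show ?case
    by (cases I) (auto split: option.splits)
qed simp

lemma models_GAnd: "models \<nu> (GAnd g h) \<longleftrightarrow> models \<nu> g \<and> models \<nu> h"
  by (auto simp: models_def)

lemma models_GTrue: "models \<nu> GTrue"
  by (simp add: models_def)

lemma models_ivls_guard:
  assumes "0 \<le> q" "\<nu> z = Some (of_rat q)"
  shows "models \<nu> (ivls_guard z Is) \<longleftrightarrow> (\<forall>I\<in>set Is. in_ivl q I)"
proof -
  have "gholds \<nu> (ivl_guard z I) \<longleftrightarrow> in_ivl q I" for I
    using assms by (cases I) (auto simp: of_rat_less_eq of_rat_less split: option.splits)
  then have "gholds \<nu> (ivls_guard z Is) \<longleftrightarrow> (\<forall>I\<in>set Is. in_ivl q I)"
    by (induction Is) auto
  with assms(2) show ?thesis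
    by (auto simp: models_def gclocks_ivls_guard)
qed

lemma models_ivls_guard_None: "\<nu> z = None \<Longrightarrow> models \<nu> (ivls_guard z Is) \<longleftrightarrow> Is = []"
  by (auto simp: models_def gclocks_ivls_guard)

text \<open>Clock 0 is reset at every labelled position and clock 1 at the first position of a run.\<close>

definition resets :: "nat \<Rightarrow> 'x set \<Rightarrow> nat set" where
  "resets p L = (if L = {} then {} else {0}) \<union> (if p = 0 then {1} else {})"

lemma clock_values:
  assumes "m \<le> length ts"
    and "\<forall>k<m. tresets (\<rho> (i + k)) = resets k (elabels (ts ! k))"
  shows "vshift (vals S \<rho> i m) (of_rat (dt S (i + m))) 0 =
           map_option (\<lambda>p. of_rat (tm S (i + m) - tm S p)) (last_mark i None (take m ts)) \<and>
         vshift (vals S \<rho> i m) (of_rat (dt S (i + m))) 1 =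
           (if m = 0 then None else Some (of_rat (tm S (i + m) - tm S i)))"
  using assms
proof (induction m)
  case 0
  show ?case
    by (simp add: vshift_def)
next
  case (Suc m)
  have telescope: "(of_rat (a - b) :: real) + of_rat (c - a) = of_rat (c - b)" for a b c
    by (simp add: of_rat_add[symmetric])
  have dt: "dt S (i + Suc m) = tm S (i + Suc m) - tm S (i + m)"
    by (simp add: dt_def)
  have take: "take (Suc m) ts = take m ts @ [ts ! m]"
    using Suc.prems(1) by (simp add: take_Suc_conv_app_nth)
  have rst: "tresets (\<rho> (i + m)) = resets m (elabels (ts ! m))"
    using Suc.prems(2) by simp
  have len: "length (take m ts) = m"
    using Suc.prems(1) by simp
  from Suc have IH:
    "vshift (vals S \<rho> i m) (of_rat (dt S (i + m))) 0 =
       map_option (\<lambda>p. of_rat (tm S (i + m) - tm S p)) (last_mark i None (take m ts))"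
    "vshift (vals S \<rho> i m) (of_rat (dt S (i + m))) 1 =
       (if m = 0 then None else Some (of_rat (tm S (i + m) - tm S i)))"
    by simp_all
  show ?case
    unfolding vals.simps dt take rst last_mark_append len using IH
    by (cases "last_mark i None (take m ts)") (auto simp: vshift_def vreset_def resets_def telescope)
qed

lemma models_gap_guard_iff:
  assumes "timed_stream S" "fits S i ts" "m < length ts"
    and "\<forall>k<m. tresets (\<rho> (i + k)) = resets k (elabels (ts ! k))"
  shows "models (vshift (vals S \<rho> i m) (of_rat (dt S (i + m)))) (ivls_guard 0 G) \<longleftrightarrow>
           gaps_ok S (i + m) (last_mark i None (take m ts)) G"
proof (cases "last_mark i None (take m ts)")
  case None
  with clock_values[OF _ assms(4)] assms(3) show ?thesis
    by (simp add: models_ivls_guard_None gaps_ok_def)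
next
  case (Some p)
  with last_mark_range[OF this] assms(3) have "p \<le> i + m" "i + m \<le> length S"
    using assms(2) by (auto simp: fits_def)
  then have "0 \<le> tm S (i + m) - tm S p"
    using tm_mono[OF assms(1)] by simp
  moreover have "vshift (vals S \<rho> i m) (of_rat (dt S (i + m))) 0 = Some (of_rat (tm S (i + m) - tm S p))"
    using Some clock_values[OF _ assms(4)] assms(3) by simp
  ultimately have "models (vshift (vals S \<rho> i m) (of_rat (dt S (i + m)))) (ivls_guard 0 G) \<longleftrightarrow>
      (\<forall>I\<in>set G. in_ivl (tm S (i + m) - tm S p) I)"
    by (rule models_ivls_guard)
  with Some show ?thesis
    by (auto simp: gaps_ok_def)
qed

lemma models_window_guard_iff:
  assumes "timed_stream S" "fits S i ts" "0 < m" "m < length ts"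
    and "\<forall>k<m. tresets (\<rho> (i + k)) = resets k (elabels (ts ! k))"
  shows "models (vshift (vals S \<rho> i m) (of_rat (dt S (i + m)))) (ivls_guard 1 W) \<longleftrightarrow>
           (\<forall>I\<in>set W. in_ivl (tm S (i + m) - tm S i) I)"
proof -
  have "i + m \<le> length S"
    using assms(2,4) by (auto simp: fits_def)
  then have "0 \<le> tm S (i + m) - tm S i"
    using tm_mono[OF assms(1)] by simp
  moreover have "vshift (vals S \<rho> i m) (of_rat (dt S (i + m))) 1 = Some (of_rat (tm S (i + m) - tm S i))"
    using clock_values[OF _ assms(5)] assms(3,4) by simp
  ultimately show ?thesis
    by (rule models_ivls_guard)
qed

definition inner_trans :: "('x, 'ev) edge \<Rightarrow> (nat, nat, 'x, 'ev) trans" where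
  "inner_trans t =
     (2 * esrc t, epred t, ivls_guard 0 (egaps t), elabels t, resets (esrc t) (elabels t), 2 * etgt t)"

text \<open>Runs end with an exit transition into the final state 1, which checks the windows on
  clock 1. A run of length one exits from the initial state, where clock 1 is still undefined;
  its duration is 0, so its windows are checked when the transition is built.\<close>

definition exit_trans :: "('x, 'ev) edge \<Rightarrow> interval list \<Rightarrow> (nat, nat, 'x, 'ev) trans" where
  "exit_trans t W =
     (2 * esrc t, epred t, GAnd (ivls_guard 0 (egaps t)) (if esrc t = 0 then GTrue else ivls_guard 1 W),
      elabels t, resets (esrc t) (elabels t), 1)"

lemma inner_trans_sel [simp]:
  "tsrc (inner_trans t) = 2 * esrc t" "ttgt (inner_trans t) = 2 * etgt t" "tpred (inner_trans t) = epred t"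
  "tguard (inner_trans t) = ivls_guard 0 (egaps t)" "tlabels (inner_trans t) = elabels t"
  "tresets (inner_trans t) = resets (esrc t) (elabels t)"
  by (simp_all add: inner_trans_def tsrc_def ttgt_def tpred_def tguard_def tlabels_def tresets_def)

lemma exit_trans_sel [simp]:
  "tsrc (exit_trans t W) = 2 * esrc t" "ttgt (exit_trans t W) = 1" "tpred (exit_trans t W) = epred t"
  "tguard (exit_trans t W) = GAnd (ivls_guard 0 (egaps t)) (if esrc t = 0 then GTrue else ivls_guard 1 W)"
  "tlabels (exit_trans t W) = elabels t" "tresets (exit_trans t W) = resets (esrc t) (elabels t)"
  by (simp_all add: exit_trans_def tsrc_def ttgt_def tpred_def tguard_def tlabels_def tresets_def)

lemma run_conditions_iff:
  assumes "timed_stream S" "fits S i ts"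
    and "\<forall>m<length ts. esrc (ts ! m) = 0 \<longleftrightarrow> m = 0"
    and "\<forall>m<length ts. \<rho> (i + m) = (if Suc m < length ts then inner_trans (ts ! m) else exit_trans (ts ! m) W)"
  shows "(\<forall>m<length ts. ev S (i + m) \<in> tpred (\<rho> (i + m)) \<and>
            models (vshift (vals S \<rho> i m) (of_rat (dt S (i + m)))) (tguard (\<rho> (i + m)))) \<longleftrightarrow>
         steps_ok S i None ts \<and> (1 < length ts \<longrightarrow> window_ok S i ts W)"
proof -
  have rst: "\<forall>k<m. tresets (\<rho> (i + k)) = resets k (elabels (ts ! k))" if "m < length ts" for m
  proof (intro allI impI)
    fix k assume "k < m"
    with that assms(3,4) have "tresets (\<rho> (i + k)) = resets (esrc (ts ! k)) (elabels (ts ! k))"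
      "esrc (ts ! k) = 0 \<longleftrightarrow> k = 0"
      by auto
    then show "tresets (\<rho> (i + k)) = resets k (elabels (ts ! k))"
      by (simp add: resets_def)
  qed
  have step: "ev S (i + m) \<in> tpred (\<rho> (i + m)) \<and>
        models (vshift (vals S \<rho> i m) (of_rat (dt S (i + m)))) (tguard (\<rho> (i + m))) \<longleftrightarrow>
      ev S (i + m) \<in> epred (ts ! m) \<and> gaps_ok S (i + m) (last_mark i None (take m ts)) (egaps (ts ! m)) \<and>
      (Suc m = length ts \<and> m \<noteq> 0 \<longrightarrow> window_ok S i ts W)" if "m < length ts" for m
  proof (cases "Suc m < length ts")
    case True
    with assms(4) that show ?thesis
      using models_gap_guard_iff[OF assms(1,2) that rst[OF that]] by simp
  next
    case False
    then have len: "length ts = Suc m"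
      using that by simp
    with assms(3,4) that show ?thesis
      using models_gap_guard_iff[OF assms(1,2) that rst[OF that]] models_window_guard_iff[OF assms(1,2) _ that rst[OF that]]
      by (auto simp: models_GAnd models_GTrue window_ok_def)
  qed
  have "(\<forall>m<length ts. Suc m = length ts \<and> m \<noteq> 0 \<longrightarrow> window_ok S i ts W) \<longleftrightarrow>
      (1 < length ts \<longrightarrow> window_ok S i ts W)"
  proof
    assume "\<forall>m<length ts. Suc m = length ts \<and> m \<noteq> 0 \<longrightarrow> window_ok S i ts W"
    then have "length ts - 1 < length ts \<longrightarrow> Suc (length ts - 1) = length ts \<and> length ts - 1 \<noteq> 0 \<longrightarrow>
        window_ok S i ts W"
      by blast
    then show "1 < length ts \<longrightarrow> window_ok S i ts W"
      by simp
  qed auto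
  with step show ?thesis
    unfolding steps_ok_conv_nth by blast
qed

definition exit_transs :: "('x, 'ev) gaut \<Rightarrow> (nat, nat, 'x, 'ev) trans set" where
  "exit_transs A = {exit_trans t W | t W. t \<in> edges A \<and> (etgt t, W) \<in> accepting A \<and>
     (esrc t = 0 \<longrightarrow> (\<forall>I\<in>set W. in_ivl 0 I))}"

definition to_tcea :: "('x, 'ev) gaut \<Rightarrow> (nat, nat, 'x, 'ev) tcea" where
  "to_tcea A = \<lparr>states = {0, 1} \<union> (\<lambda>t. 2 * esrc t) ` edges A \<union> (\<lambda>t. 2 * etgt t) ` edges A,
     clocks = {0, 1}, delta = inner_trans ` edges A \<union> exit_transs A, init = 0, final = {1}\<rparr>"

lemma to_tcea_sel [simp]:
  "states (to_tcea A) = {0, 1} \<union> (\<lambda>t. 2 * esrc t) ` edges A \<union> (\<lambda>t. 2 * etgt t) ` edges A"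
  "clocks (to_tcea A) = {0, 1}" "delta (to_tcea A) = inner_trans ` edges A \<union> exit_transs A"
  "init (to_tcea A) = 0" "final (to_tcea A) = {1}"
  by (simp_all add: to_tcea_def)

lemma delta_to_tcea_cases:
  assumes "u \<in> delta (to_tcea A)"
  obtains (inner) t where "t \<in> edges A" "u = inner_trans t"
  | (exit) t W where "t \<in> edges A" "(etgt t, W) \<in> accepting A" "esrc t = 0 \<longrightarrow> (\<forall>I\<in>set W. in_ivl 0 I)"
      "u = exit_trans t W"
  using assms by (auto simp: exit_transs_def)

lemma tcea_wf_to_tcea:
  assumes "proper A" "gaut_wf Ps A"
  shows "tcea_wf Ps (to_tcea A)"
proof -
  have "exit_transs A \<subseteq> (\<lambda>(t, q, W). exit_trans t W) ` (edges A \<times> accepting A)"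
    unfolding exit_transs_def by force
  then have "finite (exit_transs A)"
    by (rule finite_subset) (use assms(1) in \<open>simp add: proper_def\<close>)
  then have "finite (delta (to_tcea A))"
    using assms(1) by (simp add: proper_def)
  moreover have "tsrc u \<in> states (to_tcea A) \<and> ttgt u \<in> states (to_tcea A) \<and> tpred u \<in> Ps \<and>
      gclocks (tguard u) \<subseteq> {0, 1} \<and> gconsts_ok (tguard u) \<and> tresets u \<subseteq> {0, 1}"
    if "u \<in> delta (to_tcea A)" for u
    using that
  proof (cases rule: delta_to_tcea_cases)
    case (inner t)
    with assms(2) show ?thesis
      by (auto simp: gaut_wf_def gclocks_ivls_guard gconsts_ok_ivls_guard resets_def)
  next
    case (exit t W)
    with assms(2) show ?thesis
      by (auto simp: gaut_wf_def gclocks_ivls_guard gconsts_ok_ivls_guard resets_def)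
  qed
  ultimately show ?thesis
    using assms(1) unfolding tcea_wf_def proper_def by auto
qed

lemma tresets_to_tcea:
  assumes "u \<in> delta (to_tcea A)"
  shows "tresets u = resets (tsrc u) (tlabels u)"
  using assms by (cases rule: delta_to_tcea_cases) (auto simp: resets_def)

lemma tsrc_run_to_tcea:
  assumes "proper A" "is_run (to_tcea A) S i j \<rho>" "k \<in> {i..j}"
  shows "tsrc (\<rho> k) = 0 \<longleftrightarrow> k = i"
proof (cases "k = i")
  case False
  with assms(3) have "k - 1 \<in> {i..<j}" "Suc (k - 1) = k"
    by auto
  with assms(2) have "tsrc (\<rho> k) = ttgt (\<rho> (k - 1))" "\<rho> (k - 1) \<in> delta (to_tcea A)"
    unfolding is_run_def by (metis, auto)
  moreover have "ttgt u \<noteq> 0" if "u \<in> delta (to_tcea A)" for u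
    using that assms(1) by (cases rule: delta_to_tcea_cases) (auto simp: proper_def)
  ultimately show ?thesis
    using False by simp
qed (use assms(2) in \<open>simp add: is_run_def\<close>)

text \<open>Resets depend only on the labels and on whether the position is the first of the run.\<close>

lemma sync_resets_to_tcea: "proper A \<Longrightarrow> sync_resets (to_tcea A)"
  unfolding sync_resets_def
proof (intro allI impI ballI)
  fix S i j \<rho> \<rho>' k
  assume "proper A" and runs: "timed_stream S \<and> is_run (to_tcea A) S i j \<rho> \<and> is_run (to_tcea A) S i j \<rho>' \<and>
      (\<forall>k\<in>{i..j}. tlabels (\<rho> k) = tlabels (\<rho>' k))" and k: "k \<in> {i..j}"
  then have "tresets (\<rho> k) = resets (tsrc (\<rho> k)) (tlabels (\<rho> k))"
    "tresets (\<rho>' k) = resets (tsrc (\<rho>' k)) (tlabels (\<rho>' k))"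
    using tresets_to_tcea unfolding is_run_def by blast+
  moreover have "tsrc (\<rho> k) = 0 \<longleftrightarrow> tsrc (\<rho>' k) = 0"
    using runs k tsrc_run_to_tcea[OF \<open>proper A\<close>] by blast
  ultimately show "tresets (\<rho> k) = tresets (\<rho>' k)"
    using runs k by (simp add: resets_def)
qed

lemma ball_atLeastAtMost_shift: "0 < (n :: nat) \<Longrightarrow> (\<forall>k\<in>{i..i + n - 1}. P k) \<longleftrightarrow> (\<forall>m<n. P (i + m))"
proof
  assume "0 < n" and h: "\<forall>m<n. P (i + m)"
  show "\<forall>k\<in>{i..i + n - 1}. P k"
  proof
    fix k assume "k \<in> {i..i + n - 1}"
    then have "i \<le> k" "k \<le> i + n - 1"
      by simp_all
    with \<open>0 < n\<close> have "k - i < n" "k = i + (k - i)"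
      by auto
    with h show "P k"
      by metis
  qed
qed auto

lemma ball_atLeastLessThan_shift: "(\<forall>k\<in>{i..<i + (n :: nat) - 1}. P k) \<longleftrightarrow> (\<forall>m. Suc m < n \<longrightarrow> P (i + m))"
proof
  assume h: "\<forall>m. Suc m < n \<longrightarrow> P (i + m)"
  show "\<forall>k\<in>{i..<i + n - 1}. P k"
  proof
    fix k assume "k \<in> {i..<i + n - 1}"
    then have "i \<le> k" "k < i + n - 1"
      by simp_all
    then have "Suc (k - i) < n" "k = i + (k - i)"
      by auto
    with h show "P k"
      by metis
  qed
qed auto

lemma is_run_to_tcea_iff:
  assumes "proper A" "timed_stream S" "fits S i ts" "path (edges A) 0 ts q" "(q, W) \<in> accepting A"
    and "length ts = 1 \<longrightarrow> window_ok S i ts W"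
    and \<rho>: "\<forall>m<length ts. \<rho> (i + m) = (if Suc m < length ts then inner_trans (ts ! m) else exit_trans (ts ! m) W)"
  shows "is_run (to_tcea A) S i (i + length ts - 1) \<rho> \<longleftrightarrow> steps_ok S i None ts \<and> window_ok S i ts W"
proof -
  let ?n = "length ts"
  have src: "\<forall>m<?n. esrc (ts ! m) = 0 \<longleftrightarrow> m = 0"
    using path_esrc_eq_0_iff[OF assms(1,4)] .
  have ts: "0 < ?n" "set ts \<subseteq> edges A" "etgt (ts ! (?n - 1)) = q"
    using assms(3) path_subset[OF assms(4)] path_hd_last[OF assms(4)] by (auto simp: fits_def last_conv_nth)
  have "i \<le> i + ?n - 1"
    using ts(1) by linarith
  moreover have "1 \<le> i" "i + ?n - 1 \<le> length S" "tsrc (\<rho> i) = 0"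
    using assms(3) \<rho>[rule_format, of 0] src ts(1) by (auto simp: fits_def)
  ultimately have start: "1 \<le> i" "i \<le> i + ?n - 1" "i + ?n - 1 \<le> length S" "tsrc (\<rho> i) = 0"
    by simp_all
  have links: "\<forall>k\<in>{i..<i + ?n - 1}. ttgt (\<rho> k) = tsrc (\<rho> (Suc k))"
    unfolding ball_atLeastLessThan_shift
    using \<rho> path_link[OF assms(4)] by (auto simp del: nth_Cons_Suc)
  have "\<forall>m<?n. \<rho> (i + m) \<in> delta (to_tcea A)"
  proof (intro allI impI)
    fix m assume m: "m < ?n"
    show "\<rho> (i + m) \<in> delta (to_tcea A)"
    proof (cases "Suc m < ?n")
      case False
      with m have "m = ?n - 1"
        by simp
      moreover have "esrc (ts ! m) = 0 \<longrightarrow> (\<forall>I\<in>set W. in_ivl 0 I)"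
        using src m assms(6) \<open>m = ?n - 1\<close> by (auto simp: window_ok_def)
      moreover have "ts ! m \<in> edges A" "etgt (ts ! m) = q"
        using ts m \<open>m = ?n - 1\<close> nth_mem by auto
      ultimately have "exit_trans (ts ! m) W \<in> exit_transs A"
        using assms(5) unfolding exit_transs_def by (intro CollectI exI[of _ "ts ! m"] exI[of _ W]) simp
      with \<rho> m False show ?thesis
        by simp
    next
      case True
      have "ts ! m \<in> edges A"
        using ts(2) m nth_mem by blast
      with \<rho> m True show ?thesis
        by simp
    qed
  qed
  with start links ts(1) have "is_run (to_tcea A) S i (i + ?n - 1) \<rho> \<longleftrightarrow>
      (\<forall>m<?n. ev S (i + m) \<in> tpred (\<rho> (i + m)) \<and>
         models (vshift (vals S \<rho> i m) (of_rat (dt S (i + m)))) (tguard (\<rho> (i + m))))"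
    unfolding is_run_def ball_atLeastAtMost_shift[OF ts(1)] by auto
  also have "\<dots> \<longleftrightarrow> steps_ok S i None ts \<and> (1 < ?n \<longrightarrow> window_ok S i ts W)"
    by (rule run_conditions_iff[OF assms(2,3) src \<rho>])
  also have "\<dots> \<longleftrightarrow> steps_ok S i None ts \<and> window_ok S i ts W"
  proof (cases "?n = 1")
    case False
    with ts(1) have "1 < ?n"
      by linarith
    then show ?thesis
      by simp
  qed (use assms(6) in simp)
  finally show ?thesis .
qed

lemma run_output_eq_cev:
  assumes "ts \<noteq> []" "\<forall>m<length ts. tlabels (\<rho> (i + m)) = elabels (ts ! m)"
  shows "run_output i (i + length ts - 1) \<rho> = cev i ts"
proof -
  have "k \<in> {i..i + length ts - 1} \<and> X \<in> tlabels (\<rho> k) \<longleftrightarrow> k \<in> marks i ts X" for k X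
  proof (cases "i \<le> k \<and> k < i + length ts")
    case True
    then have "k \<in> {i..i + length ts - 1}" "k - i < length ts" "k = i + (k - i)"
      by auto
    moreover from this(2,3) assms(2) have "tlabels (\<rho> k) = elabels (ts ! (k - i))"
      by metis
    ultimately show ?thesis
      unfolding marks_iff using True by simp
  next
    case False
    with assms(1) show ?thesis
      unfolding marks_iff by (cases ts) auto
  qed
  then show ?thesis
    by (auto simp: run_output_def cev_def fun_eq_iff)
qed

lemma run_to_tcea_edges:
  assumes "proper A" "is_run (to_tcea A) S i j \<rho>" "ttgt (\<rho> j) \<in> final (to_tcea A)"
  obtains ts q W where "length ts = Suc (j - i)" "path (edges A) 0 ts q" "(q, W) \<in> accepting A"
    "esrc (last ts) = 0 \<longrightarrow> (\<forall>I\<in>set W. in_ivl 0 I)"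
    "\<forall>m<length ts. \<rho> (i + m) = (if Suc m < length ts then inner_trans (ts ! m) else exit_trans (ts ! m) W)"
proof -
  have run: "i \<le> j" "tsrc (\<rho> i) = 0" "\<forall>k\<in>{i..j}. \<rho> k \<in> delta (to_tcea A)"
    "\<forall>k\<in>{i..<j}. ttgt (\<rho> k) = tsrc (\<rho> (Suc k))"
    using assms(2) unfolding is_run_def by auto
  have even_src: "even (tsrc u)" if "u \<in> delta (to_tcea A)" for u
    using that by (cases rule: delta_to_tcea_cases) auto
  have "\<exists>t. t \<in> edges A \<and> \<rho> k = inner_trans t" if k: "k \<in> {i..<j}" for k
  proof -
    have "\<rho> k \<in> delta (to_tcea A)" "even (ttgt (\<rho> k))"
      using k run even_src[of "\<rho> (Suc k)"] by auto
    then show ?thesis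
      by (cases rule: delta_to_tcea_cases) auto
  qed
  then obtain tt where tt: "\<forall>k\<in>{i..<j}. tt k \<in> edges A \<and> \<rho> k = inner_trans (tt k)"
    by metis
  have "\<rho> j \<in> delta (to_tcea A)" "ttgt (\<rho> j) = 1"
    using run assms(3) by auto
  then obtain tj W where tj: "tj \<in> edges A" "(etgt tj, W) \<in> accepting A"
    "esrc tj = 0 \<longrightarrow> (\<forall>I\<in>set W. in_ivl 0 I)" "\<rho> j = exit_trans tj W"
    by (cases rule: delta_to_tcea_cases) auto
  define ts where "ts = map tt [i..<j] @ [tj]"
  have len: "length ts = Suc (j - i)"
    by (simp add: ts_def)
  have nth: "ts ! m = (if m < j - i then tt (i + m) else tj)" if "m < length ts" for m
    using that len by (auto simp: ts_def nth_append)
  have \<rho>: "\<forall>m<length ts. \<rho> (i + m) = (if Suc m < length ts then inner_trans (ts ! m) else exit_trans (ts ! m) W)"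
  proof (intro allI impI)
    fix m assume m: "m < length ts"
    show "\<rho> (i + m) = (if Suc m < length ts then inner_trans (ts ! m) else exit_trans (ts ! m) W)"
    proof (cases "Suc m < length ts")
      case True
      then have "m < j - i" "i + m \<in> {i..<j}"
        using len by auto
      with tt nth m True show ?thesis
        by auto
    next
      case False
      then have "m = j - i" "i + m = j"
        using len m run(1) by auto
      with tj(4) nth m False show ?thesis
        by auto
    qed
  qed
  have "path (edges A) (esrc (hd ts)) ts (etgt (last ts))"
  proof (rule path_of_links)
    show "set ts \<subseteq> edges A"
      using tt tj(1) by (auto simp: ts_def)
    show "\<forall>m. Suc m < length ts \<longrightarrow> etgt (ts ! m) = esrc (ts ! Suc m)"
    proof (intro allI impI)
      fix m assume m: "Suc m < length ts"
      then have "ttgt (\<rho> (i + m)) = tsrc (\<rho> (i + Suc m))"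
        using run(4) len by auto
      with \<rho> m show "etgt (ts ! m) = esrc (ts ! Suc m)"
        by (auto split: if_splits)
    qed
  qed (simp add: ts_def)
  moreover have "esrc (hd ts) = 0" "last ts = tj"
    using \<rho> run(2) len by (auto simp: ts_def hd_conv_nth split: if_splits)
  ultimately show thesis
    using that len tj \<rho> by auto
qed

lemma accepts_imp_cea_sem:
  assumes "proper A" "timed_stream S" "accepts A S i ts"
  shows "cev i ts \<in> cea_sem (to_tcea A) S"
proof -
  obtain q W where acc: "fits S i ts" "steps_ok S i None ts" "path (edges A) 0 ts q" "(q, W) \<in> accepting A"
    "window_ok S i ts W"
    using assms(3) unfolding accepts_def reaches_def by blast
  define \<rho> where "\<rho> k = (if Suc (k - i) < length ts then inner_trans (ts ! (k - i)) else exit_trans (ts ! (k - i)) W)"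
    for k
  have \<rho>: "\<forall>m<length ts. \<rho> (i + m) = (if Suc m < length ts then inner_trans (ts ! m) else exit_trans (ts ! m) W)"
    by (simp add: \<rho>_def)
  have "is_run (to_tcea A) S i (i + length ts - 1) \<rho>"
    using is_run_to_tcea_iff[OF assms(1,2) acc(1,3,4) _ \<rho>] acc(2,5) by simp
  moreover have "ts \<noteq> []"
    using acc(1) by (simp add: fits_def)
  then have "ttgt (\<rho> (i + length ts - 1)) \<in> final (to_tcea A)"
    by (simp add: \<rho>_def)
  moreover have "run_output i (i + length ts - 1) \<rho> = cev i ts"
    using \<open>ts \<noteq> []\<close> \<rho> by (intro run_output_eq_cev) auto
  ultimately show ?thesis
    unfolding cea_sem_def by force
qed

lemma cea_sem_to_tcea:
  assumes "proper A" "timed_stream S"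
  shows "cea_sem (to_tcea A) S = gsem A S"
proof
  show "gsem A S \<subseteq> cea_sem (to_tcea A) S"
    unfolding gsem_def using accepts_imp_cea_sem[OF assms] by blast
  show "cea_sem (to_tcea A) S \<subseteq> gsem A S"
  proof
    fix C assume "C \<in> cea_sem (to_tcea A) S"
    then obtain i j \<rho> where C: "C = run_output i j \<rho>" and run: "is_run (to_tcea A) S i j \<rho>"
      and fin: "ttgt (\<rho> j) \<in> final (to_tcea A)"
      unfolding cea_sem_def by blast
    from run_to_tcea_edges[OF assms(1) run fin] obtain ts q W where ts: "length ts = Suc (j - i)"
      "path (edges A) 0 ts q" "(q, W) \<in> accepting A" "esrc (last ts) = 0 \<longrightarrow> (\<forall>I\<in>set W. in_ivl 0 I)"
      and \<rho>: "\<forall>m<length ts. \<rho> (i + m) = (if Suc m < length ts then inner_trans (ts ! m) else exit_trans (ts ! m) W)"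
      by blast
    have j: "j = i + length ts - 1" "ts \<noteq> []"
      using run ts(1) unfolding is_run_def by auto
    have "fits S i ts"
      using run ts(1) unfolding is_run_def fits_def by auto
    moreover have "length ts = 1 \<longrightarrow> window_ok S i ts W"
      using ts(4) path_esrc_eq_0_iff[OF assms(1) ts(2)] j(2) by (auto simp: window_ok_def last_conv_nth)
    ultimately have "steps_ok S i None ts \<and> window_ok S i ts W"
      using is_run_to_tcea_iff[OF assms _ ts(2,3) _ \<rho>] run j(1) by blast
    then have "accepts A S i ts"
      using \<open>fits S i ts\<close> ts(2,3) unfolding accepts_def reaches_def by blast
    moreover have "C = cev i ts"
      unfolding C j(1) using j(2) \<rho> by (intro run_output_eq_cev) auto
    ultimately show "C \<in> gsem A S"
      unfolding gsem_def by blast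
  qed
qed

theorem theorem4:
  fixes tp :: "'ev \<Rightarrow> 'x::finite" and T :: "'x set" and Ps :: "'ev set set"
    and \<phi> :: "('x, 'ev) tcel"
  assumes types: "\<forall>e. tp e \<in> T"
    and P_univ: "UNIV \<in> Ps"
    and P_int: "\<forall>P\<in>Ps. \<forall>P'\<in>Ps. P \<inter> P' \<in> Ps"
    and P_compl: "\<forall>P\<in>Ps. - P \<in> Ps"
    and P_types: "\<forall>R\<in>T. {e. tp e = R} \<in> Ps"
    and wf: "cel_wf T Ps \<phi>"
    and win: "windowed \<phi>"
  shows "\<exists>A :: (nat, nat, 'x, 'ev) tcea.
           tcea_wf Ps A \<and> card (clocks A) = 2 \<and> sync_resets A \<and>
           (\<forall>S. timed_stream S \<longrightarrow> cea_sem A S = cel_sem tp S \<phi>)"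
proof -
  let ?A = "to_tcea (compile tp \<phi>)"
  have "tcea_wf Ps ?A"
    using tcea_wf_to_tcea[OF proper_compile gaut_wf_compile[OF P_univ P_int P_types wf]] .
  moreover have "card (clocks ?A) = 2"
    by simp
  moreover have "sync_resets ?A"
    by (rule sync_resets_to_tcea[OF proper_compile])
  moreover have "cea_sem ?A S = cel_sem tp S \<phi>" if "timed_stream S" for S
    using cea_sem_to_tcea[OF proper_compile[of tp \<phi>] that] gsem_compile[OF win, of tp S] by simp
  ultimately show ?thesis
    by blast
qed

end
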